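(* Let $T$ be a bounded, linear, positive operator on $L^2(G,\mathbb{C}^{s\times r})$ such that $\langle T\mathbf{f},\mathbf{g}\rangle=\langle\mathbf{f},T^*\mathbf{g}\rangle$ for all $\mathbf{f},\mathbf{g}\in L^2(G,\mathbb{C}^{s\times r})$. Then $\langle T^{1/2}\mathbf{f},\mathbf{g}\rangle=\langle\mathbf{f},(T^{1/2})^*\mathbf{g}\rangle$ for all $\mathbf{f},\mathbf{g}\in L^2(G,\mathbb{C}^{s\times r})$.
   Context: $G$ is a locally compact abelian group that is metrizable and $\sigma$-compact, with Haar measure $\mu_G$; $s,r\in\mathbb{N}$. $L^2(G,\mathbb{C}^{s\times r})$ is the space of $s\times r$ matrices $\mathbf{f}=[f_{ij}]$ with all entries in $L^2(G)$. The matrix-valued inner product is $\langle \mathbf{f},\mathbf{g}\rangle=\int_G \mathbf{f}(x)\mathbf{g}^*(x)\,d\mu_G\in M_s(\mathbb{C})$ (entrywise integral, $\mathbf{g}^*$ conjugate transpose). $L^2(G,\mathbb{C}^{s\times r})$ is a Hilbert space with inner product $\langle \mathbf{f},\mathbf{g}\rangle_{L^2}=\mathrm{tr}\langle \mathbf{f},\mathbf{g}\rangle$ and Frobenius norm; $T^*$ denotes the Hilbert-adjoint with respect to this inner product. $T$ is positive if $T^*=T$ and $\mathrm{tr}\langle T\mathbf{f},\mathbf{f}\rangle\ge0$ for all $\mathbf{f}$. $T^{1/2}$ denotes the unique bounded positive operator $W$ with $W^2=T$. *)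

theory Defs
  imports "HOL-Analysis.Analysis"
begin

text \<open>G is modelled by a type 'g that is an abelian topological group whose topology
  is given by a metric (metrizable); local compactness and sigma-compactness are
  stated explicitly.\<close>

definition locally_compact_sigma_compact :: "'g::{topological_ab_group_add, metric_space} itself \<Rightarrow> bool" where
  "locally_compact_sigma_compact _ \<longleftrightarrow>
     (\<forall>x::'g. \<exists>U K. open U \<and> compact K \<and> x \<in> U \<and> U \<subseteq> K) \<and>
     (\<exists>K :: nat \<Rightarrow> 'g set. (\<forall>n. compact (K n)) \<and> (\<Union>n. K n) = UNIV)"

definition haar_measure :: "'g::{topological_ab_group_add, metric_space} measure \<Rightarrow> bool" where
  "haar_measure \<mu> \<longleftrightarrow>
     sets \<mu> = sets borel \<and>
     (\<forall>A\<in>sets borel. \<forall>a::'g. emeasure \<mu> ((\<lambda>x. a + x) ` A) = emeasure \<mu> A) \<and>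
     (\<forall>K. compact K \<longrightarrow> emeasure \<mu> K < \<infinity>) \<and>
     (\<forall>U. open U \<and> U \<noteq> {} \<longrightarrow> emeasure \<mu> U > 0) \<and>
     (\<forall>A\<in>sets borel. emeasure \<mu> A = (INF U\<in>{U. open U \<and> A \<subseteq> U}. emeasure \<mu> U)) \<and>
     (\<forall>U. open U \<longrightarrow> emeasure \<mu> U = (SUP K\<in>{K. compact K \<and> K \<subseteq> U}. emeasure \<mu> K))"

text \<open>An s x r complex matrix is an element of complex^'r^'s (rows indexed by 's,
  columns by 'r). Elements of L^2 are represented by functions; equality in L^2 is
  equality almost everywhere.\<close>

type_synonym ('g, 'r, 's) mfun = "'g \<Rightarrow> complex^'r^'s"

definition L2 :: "'g measure \<Rightarrow> ('g, 'r::finite, 's::finite) mfun set" where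
  "L2 \<mu> = {f. \<forall>i j. (\<lambda>x. f x $ i $ j) \<in> borel_measurable \<mu> \<and>
                     integrable \<mu> (\<lambda>x. (cmod (f x $ i $ j))^2)}"

definition mip :: "'g measure \<Rightarrow> ('g, 'r::finite, 's::finite) mfun \<Rightarrow> ('g, 'r, 's) mfun \<Rightarrow> complex^'s^'s" where
  "mip \<mu> f g = (\<chi> i k. LINT x|\<mu>. (\<Sum>j\<in>UNIV. f x $ i $ j * cnj (g x $ k $ j)))"

definition mtrace :: "complex^'s^'s \<Rightarrow> complex" where
  "mtrace A = (\<Sum>i\<in>UNIV. A $ i $ i)"

definition hip :: "'g measure \<Rightarrow> ('g, 'r::finite, 's::finite) mfun \<Rightarrow> ('g, 'r, 's) mfun \<Rightarrow> complex" where
  "hip \<mu> f g = mtrace (mip \<mu> f g)"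

definition L2norm :: "'g measure \<Rightarrow> ('g, 'r::finite, 's::finite) mfun \<Rightarrow> real" where
  "L2norm \<mu> f = sqrt (Re (hip \<mu> f f))"

definition madd :: "('g, 'r::finite, 's::finite) mfun \<Rightarrow> ('g, 'r, 's) mfun \<Rightarrow> ('g, 'r, 's) mfun" where
  "madd f g = (\<lambda>x. \<chi> i j. f x $ i $ j + g x $ i $ j)"

definition msmult :: "complex \<Rightarrow> ('g, 'r::finite, 's::finite) mfun \<Rightarrow> ('g, 'r, 's) mfun" where
  "msmult c f = (\<lambda>x. \<chi> i j. c * f x $ i $ j)"

definition bounded_linear_op :: "'g measure \<Rightarrow> (('g, 'r::finite, 's::finite) mfun \<Rightarrow> ('g, 'r, 's) mfun) \<Rightarrow> bool" where
  "bounded_linear_op \<mu> T \<longleftrightarrow>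
     (\<forall>f\<in>L2 \<mu>. T f \<in> L2 \<mu>) \<and>
     (\<forall>f\<in>L2 \<mu>. \<forall>g\<in>L2 \<mu>. (AE x in \<mu>. f x = g x) \<longrightarrow> (AE x in \<mu>. T f x = T g x)) \<and>
     (\<forall>f\<in>L2 \<mu>. \<forall>g\<in>L2 \<mu>. \<forall>a b. AE x in \<mu>. T (madd (msmult a f) (msmult b g)) x
                                    = madd (msmult a (T f)) (msmult b (T g)) x) \<and>
     (\<exists>C. \<forall>f\<in>L2 \<mu>. L2norm \<mu> (T f) \<le> C * L2norm \<mu> f)"

definition is_adjoint :: "'g measure \<Rightarrow> (('g, 'r::finite, 's::finite) mfun \<Rightarrow> ('g, 'r, 's) mfun)
                           \<Rightarrow> (('g, 'r, 's) mfun \<Rightarrow> ('g, 'r, 's) mfun) \<Rightarrow> bool" where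
  "is_adjoint \<mu> T Ts \<longleftrightarrow> bounded_linear_op \<mu> Ts \<and>
     (\<forall>f\<in>L2 \<mu>. \<forall>g\<in>L2 \<mu>. hip \<mu> (T f) g = hip \<mu> f (Ts g))"

definition positive_op :: "'g measure \<Rightarrow> (('g, 'r::finite, 's::finite) mfun \<Rightarrow> ('g, 'r, 's) mfun) \<Rightarrow> bool" where
  "positive_op \<mu> T \<longleftrightarrow> is_adjoint \<mu> T T \<and>
     (\<forall>f\<in>L2 \<mu>. Im (hip \<mu> (T f) f) = 0 \<and> Re (hip \<mu> (T f) f) \<ge> 0)"

text \<open>W is a (hence the, up to a.e. equality) square root T^{1/2} of T: bounded, positive, W^2 = T.\<close>
definition is_sqrt_op :: "'g measure \<Rightarrow> (('g, 'r::finite, 's::finite) mfun \<Rightarrow> ('g, 'r, 's) mfun)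
                           \<Rightarrow> (('g, 'r, 's) mfun \<Rightarrow> ('g, 'r, 's) mfun) \<Rightarrow> bool" where
  "is_sqrt_op \<mu> T W \<longleftrightarrow> bounded_linear_op \<mu> W \<and> positive_op \<mu> W \<and>
     (\<forall>f\<in>L2 \<mu>. AE x in \<mu>. W (W f) x = T f x)"

end

theory Submission
  imports Defs
begin

(* The matrix-valued adjointness of T makes T commute with left multiplication f |-> A f by
   every constant s x s matrix A. For a Hermitian involution A, the operator A W A is again a
   positive square root of T, hence equals W by uniqueness of positive square roots. So W
   commutes with these multiplications and, taking products and linear combinations, with
   multiplication by every matrix unit E_kl. Since tr <E_kl f, g> is the (l, k) entry of
   <f, g>, the matrix-valued adjointness of W follows from its scalar adjointness.

   Uniqueness of positive square roots W, V is the classical argument: D = W - V satisfies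
   W D = - D V, so D^2 commutes with W; a product of commuting positive operators is
   positive (via the iteration P_(n+1) = P_n - P_n^2 for 0 <= P <= 1), which forces
   <D^3 x, x> = 0 and then D = 0. All operator identities hold up to equality a.e. *)

section \<open>Equality almost everywhere and the inner products on L2\<close>

definition ae_eq :: "'a measure \<Rightarrow> ('a \<Rightarrow> 'b) \<Rightarrow> ('a \<Rightarrow> 'b) \<Rightarrow> bool" where
  "ae_eq \<mu> f g \<longleftrightarrow> (AE x in \<mu>. f x = g x)"

lemma ae_eq_refl [simp]: "ae_eq \<mu> f f"
  by (simp add: ae_eq_def)

lemma ae_eq_sym: "ae_eq \<mu> f g \<Longrightarrow> ae_eq \<mu> g f"
  unfolding ae_eq_def by (erule AE_mp) auto

lemma ae_eq_trans [trans]: "ae_eq \<mu> f g \<Longrightarrow> ae_eq \<mu> g h \<Longrightarrow> ae_eq \<mu> f h"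
  unfolding ae_eq_def by (erule AE_mp, erule AE_mp) auto

definition msub :: "('g, 'r::finite, 's::finite) mfun \<Rightarrow> ('g, 'r, 's) mfun \<Rightarrow> ('g, 'r, 's) mfun" where
  "msub f g = madd f (msmult (-1) g)"

lemma ae_eq_madd: "ae_eq \<mu> f f' \<Longrightarrow> ae_eq \<mu> g g' \<Longrightarrow> ae_eq \<mu> (madd f g) (madd f' g')"
  unfolding ae_eq_def madd_def by (erule AE_mp, erule AE_mp) auto

lemma ae_eq_msmult: "ae_eq \<mu> f f' \<Longrightarrow> ae_eq \<mu> (msmult c f) (msmult c f')"
  unfolding ae_eq_def msmult_def by (erule AE_mp) auto

lemma ae_eq_msub: "ae_eq \<mu> f f' \<Longrightarrow> ae_eq \<mu> g g' \<Longrightarrow> ae_eq \<mu> (msub f g) (msub f' g')"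
  unfolding msub_def by (intro ae_eq_madd ae_eq_msmult)

lemma ae_eq_if_msub_ae_zero: "ae_eq \<mu> (msub f g) (\<lambda>x. 0) \<Longrightarrow> ae_eq \<mu> f g"
  unfolding ae_eq_def msub_def madd_def msmult_def by (erule AE_mp) (auto simp: vec_eq_iff)

lemma msmult_1 [simp]: "msmult 1 f = f"
  by (simp add: msmult_def vec_eq_iff)

lemma msmult_msmult: "msmult a (msmult b f) = msmult (a * b) f"
  by (simp add: msmult_def vec_eq_iff fun_eq_iff)

lemma madd_eq_plus: "madd f g = (\<lambda>x. f x + g x)"
  by (simp add: madd_def vec_eq_iff fun_eq_iff)

lemma L2_measurable: "f \<in> L2 \<mu> \<Longrightarrow> (\<lambda>x. f x $ i $ j) \<in> borel_measurable \<mu>"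
  by (simp add: L2_def)

lemma L2_integrable: "f \<in> L2 \<mu> \<Longrightarrow> integrable \<mu> (\<lambda>x. (cmod (f x $ i $ j))\<^sup>2)"
  by (simp add: L2_def)

lemma zero_L2: "(\<lambda>x. 0) \<in> L2 \<mu>"
  by (simp add: L2_def)

lemma msmult_L2:
  assumes f: "f \<in> L2 \<mu>"
  shows "msmult c f \<in> L2 \<mu>"
  unfolding L2_def mem_Collect_eq
proof (intro allI conjI)
  fix i j
  show "(\<lambda>x. msmult c f x $ i $ j) \<in> borel_measurable \<mu>"
    using L2_measurable[OF f] by (simp add: msmult_def)
  show "integrable \<mu> (\<lambda>x. (cmod (msmult c f x $ i $ j))\<^sup>2)"
    using L2_integrable[OF f, of i j] by (simp add: msmult_def norm_mult power_mult_distrib)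
qed

lemma madd_L2:
  assumes f: "f \<in> L2 \<mu>" and g: "g \<in> L2 \<mu>"
  shows "madd f g \<in> L2 \<mu>"
  unfolding L2_def mem_Collect_eq
proof (intro allI conjI)
  fix i j
  let ?a = "\<lambda>x. cmod (f x $ i $ j)" and ?b = "\<lambda>x. cmod (g x $ i $ j)"
  show meas: "(\<lambda>x. madd f g x $ i $ j) \<in> borel_measurable \<mu>"
    using L2_measurable[OF f] L2_measurable[OF g] by (simp add: madd_def)
  show "integrable \<mu> (\<lambda>x. (cmod (madd f g x $ i $ j))\<^sup>2)"
  proof (rule Bochner_Integration.integrable_bound)
    show "integrable \<mu> (\<lambda>x. 2 * (?a x)\<^sup>2 + 2 * (?b x)\<^sup>2)"
      using L2_integrable[OF f] L2_integrable[OF g] by auto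
    show "(\<lambda>x. (cmod (madd f g x $ i $ j))\<^sup>2) \<in> borel_measurable \<mu>"
      using meas by measurable
    show "AE x in \<mu>. norm ((cmod (madd f g x $ i $ j))\<^sup>2) \<le> norm (2 * (?a x)\<^sup>2 + 2 * (?b x)\<^sup>2)"
    proof (rule AE_I2)
      fix x
      have "(cmod (madd f g x $ i $ j))\<^sup>2 \<le> (?a x + ?b x)\<^sup>2"
        by (simp add: madd_def norm_triangle_ineq power_mono)
      also have "\<dots> \<le> 2 * (?a x)\<^sup>2 + 2 * (?b x)\<^sup>2"
        using sum_squares_bound[of "?a x" "?b x"] by (simp add: power2_sum)
      finally show "norm ((cmod (madd f g x $ i $ j))\<^sup>2) \<le> norm (2 * (?a x)\<^sup>2 + 2 * (?b x)\<^sup>2)"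
        by simp
    qed
  qed
qed

lemma msub_L2: "f \<in> L2 \<mu> \<Longrightarrow> g \<in> L2 \<mu> \<Longrightarrow> msub f g \<in> L2 \<mu>"
  unfolding msub_def by (intro madd_L2 msmult_L2)

lemma sum_L2:
  fixes g :: "'k \<Rightarrow> ('g, 'r::finite, 's::finite) mfun"
  assumes "finite S" "\<And>k. k \<in> S \<Longrightarrow> g k \<in> L2 \<mu>"
  shows "(\<lambda>x. \<Sum>k\<in>S. g k x) \<in> L2 \<mu>"
  using assms
proof (induction S rule: finite_induct)
  case empty
  then show ?case using zero_L2 by simp
next
  case (insert k S)
  then show ?case
    using madd_L2[of "g k" \<mu> "\<lambda>x. \<Sum>k\<in>S. g k x"] by (simp add: madd_eq_plus)
qed

lemma integrable_mult_cnj_L2: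
  assumes f: "f \<in> L2 \<mu>" and g: "g \<in> L2 \<mu>"
  shows "integrable \<mu> (\<lambda>x. f x $ i $ j * cnj (g x $ k $ l))"
proof (rule Bochner_Integration.integrable_bound)
  let ?a = "\<lambda>x. cmod (f x $ i $ j)" and ?b = "\<lambda>x. cmod (g x $ k $ l)"
  show "integrable \<mu> (\<lambda>x. (?a x)\<^sup>2 + (?b x)\<^sup>2)"
    using L2_integrable[OF f] L2_integrable[OF g] by auto
  show "(\<lambda>x. f x $ i $ j * cnj (g x $ k $ l)) \<in> borel_measurable \<mu>"
  proof -
    have "(\<lambda>x. cnj (g x $ k $ l)) \<in> borel_measurable \<mu>"
      by (rule borel_measurable_continuous_on[OF continuous_on_cnj[OF continuous_on_id] L2_measurable[OF g]])
    then show ?thesis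
      using L2_measurable[OF f] by measurable
  qed
  have "?a x * ?b x \<le> (?a x)\<^sup>2 + (?b x)\<^sup>2" for x
    using sum_squares_bound[of "?a x" "?b x"]
      mult_nonneg_nonneg[OF norm_ge_zero norm_ge_zero, of "f x $ i $ j" "g x $ k $ l"] by linarith
  then show "AE x in \<mu>. norm (f x $ i $ j * cnj (g x $ k $ l)) \<le> norm ((?a x)\<^sup>2 + (?b x)\<^sup>2)"
    by (simp add: norm_mult)
qed

lemma integrable_mip_integrand:
  assumes "f \<in> L2 \<mu>" "g \<in> L2 \<mu>"
  shows "integrable \<mu> (\<lambda>x. \<Sum>j\<in>UNIV. f x $ i $ j * cnj (g x $ k $ j))"
  using integrable_mult_cnj_L2[OF assms] by auto

lemma mip_nth: "mip \<mu> f g $ i $ k = (LINT x|\<mu>. (\<Sum>j\<in>UNIV. f x $ i $ j * cnj (g x $ k $ j)))"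
  by (simp add: mip_def)

lemma cnj_mip: "cnj (mip \<mu> f g $ i $ k) = mip \<mu> g f $ k $ i"
proof -
  have "cnj (mip \<mu> f g $ i $ k) = (LINT x|\<mu>. cnj (\<Sum>j\<in>UNIV. f x $ i $ j * cnj (g x $ k $ j)))"
    unfolding mip_nth by (rule Bochner_Integration.integral_cnj[symmetric])
  then show ?thesis
    unfolding mip_nth by (simp add: mult.commute)
qed

lemma hip_commute: "hip \<mu> g f = cnj (hip \<mu> f g)"
  unfolding hip_def mtrace_def by (simp add: cnj_mip)

lemma mip_linear_left:
  assumes "f \<in> L2 \<mu>" "g \<in> L2 \<mu>" "h \<in> L2 \<mu>"
  shows "mip \<mu> (madd (msmult a f) (msmult b g)) h $ i $ k = a * mip \<mu> f h $ i $ k + b * mip \<mu> g h $ i $ k"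
proof -
  have "mip \<mu> (madd (msmult a f) (msmult b g)) h $ i $ k =
    (LINT x|\<mu>. a * (\<Sum>j\<in>UNIV. f x $ i $ j * cnj (h x $ k $ j)) + b * (\<Sum>j\<in>UNIV. g x $ i $ j * cnj (h x $ k $ j)))"
    unfolding mip_nth madd_def msmult_def
    by (simp add: sum_distrib_left sum.distrib algebra_simps)
  then show ?thesis
    using integrable_mip_integrand[OF assms(1,3)] integrable_mip_integrand[OF assms(2,3)]
    by (simp add: mip_nth)
qed

lemma hip_linear_left:
  "f \<in> L2 \<mu> \<Longrightarrow> g \<in> L2 \<mu> \<Longrightarrow> h \<in> L2 \<mu> \<Longrightarrow>
    hip \<mu> (madd (msmult a f) (msmult b g)) h = a * hip \<mu> f h + b * hip \<mu> g h"
  unfolding hip_def mtrace_def by (simp add: mip_linear_left sum.distrib sum_distrib_left)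

lemma hip_madd_left:
  "f \<in> L2 \<mu> \<Longrightarrow> g \<in> L2 \<mu> \<Longrightarrow> h \<in> L2 \<mu> \<Longrightarrow> hip \<mu> (madd f g) h = hip \<mu> f h + hip \<mu> g h"
  using hip_linear_left[of f \<mu> g h 1 1] by simp

lemma hip_msmult_left: "f \<in> L2 \<mu> \<Longrightarrow> h \<in> L2 \<mu> \<Longrightarrow> hip \<mu> (msmult c f) h = c * hip \<mu> f h"
  using hip_linear_left[of f \<mu> f h c 0] by (simp add: madd_def msmult_def)

lemma hip_msub_left:
  "f \<in> L2 \<mu> \<Longrightarrow> g \<in> L2 \<mu> \<Longrightarrow> h \<in> L2 \<mu> \<Longrightarrow> hip \<mu> (msub f g) h = hip \<mu> f h - hip \<mu> g h"
  unfolding msub_def by (simp add: hip_madd_left msmult_L2 hip_msmult_left)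

lemma hip_madd_right:
  "f \<in> L2 \<mu> \<Longrightarrow> g \<in> L2 \<mu> \<Longrightarrow> h \<in> L2 \<mu> \<Longrightarrow> hip \<mu> h (madd f g) = hip \<mu> h f + hip \<mu> h g"
  using hip_madd_left[of f \<mu> g h] hip_commute[of \<mu> h] by simp

lemma hip_msmult_right: "f \<in> L2 \<mu> \<Longrightarrow> h \<in> L2 \<mu> \<Longrightarrow> hip \<mu> h (msmult c f) = cnj c * hip \<mu> h f"
  using hip_msmult_left[of f \<mu> h c] hip_commute[of \<mu> h] by simp

lemma hip_msub_right:
  "f \<in> L2 \<mu> \<Longrightarrow> g \<in> L2 \<mu> \<Longrightarrow> h \<in> L2 \<mu> \<Longrightarrow> hip \<mu> h (msub f g) = hip \<mu> h f - hip \<mu> h g"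
  using hip_msub_left[of f \<mu> g h] hip_commute[of \<mu> h] by simp

lemma mip_ae_cong_left:
  assumes "f \<in> L2 \<mu>" "f' \<in> L2 \<mu>" "g \<in> L2 \<mu>" "ae_eq \<mu> f f'"
  shows "mip \<mu> f g = mip \<mu> f' g"
proof -
  have "mip \<mu> f g $ i $ k = mip \<mu> f' g $ i $ k" for i k
    unfolding mip_nth
  proof (rule integral_cong_AE)
    show "(\<lambda>x. \<Sum>j\<in>UNIV. f x $ i $ j * cnj (g x $ k $ j)) \<in> borel_measurable \<mu>"
      "(\<lambda>x. \<Sum>j\<in>UNIV. f' x $ i $ j * cnj (g x $ k $ j)) \<in> borel_measurable \<mu>"
      using integrable_mip_integrand[OF assms(1,3)] integrable_mip_integrand[OF assms(2,3)] by auto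
    show "AE x in \<mu>. (\<Sum>j\<in>UNIV. f x $ i $ j * cnj (g x $ k $ j)) = (\<Sum>j\<in>UNIV. f' x $ i $ j * cnj (g x $ k $ j))"
      using assms(4) unfolding ae_eq_def by (rule AE_mp) auto
  qed
  then show ?thesis by (simp add: vec_eq_iff)
qed

lemma mip_ae_cong_right:
  "f \<in> L2 \<mu> \<Longrightarrow> g \<in> L2 \<mu> \<Longrightarrow> g' \<in> L2 \<mu> \<Longrightarrow> ae_eq \<mu> g g' \<Longrightarrow> mip \<mu> f g = mip \<mu> f g'"
  using mip_ae_cong_left[of g \<mu> g' f] by (metis cnj_mip vec_eq_iff)

lemma hip_ae_cong_left:
  "f \<in> L2 \<mu> \<Longrightarrow> f' \<in> L2 \<mu> \<Longrightarrow> g \<in> L2 \<mu> \<Longrightarrow> ae_eq \<mu> f f' \<Longrightarrow> hip \<mu> f g = hip \<mu> f' g"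
  unfolding hip_def by (metis mip_ae_cong_left)

lemma hip_ae_cong_right:
  "f \<in> L2 \<mu> \<Longrightarrow> g \<in> L2 \<mu> \<Longrightarrow> g' \<in> L2 \<mu> \<Longrightarrow> ae_eq \<mu> g g' \<Longrightarrow> hip \<mu> f g = hip \<mu> f g'"
  unfolding hip_def by (metis mip_ae_cong_right)

lemma hip_ae_zero_right:
  assumes "f \<in> L2 \<mu>" "g \<in> L2 \<mu>" "ae_eq \<mu> g (\<lambda>x. 0)"
  shows "hip \<mu> f g = 0"
proof -
  have "hip \<mu> f (\<lambda>x. 0) = 0"
    by (simp add: hip_def mtrace_def mip_def)
  then show ?thesis
    using hip_ae_cong_right[OF assms(1,2) zero_L2 assms(3)] by simp
qed

lemma hip_self_eq:
  "hip \<mu> f f = complex_of_real (\<Sum>i\<in>UNIV. LINT x|\<mu>. (\<Sum>j\<in>UNIV. (cmod (f x $ i $ j))\<^sup>2))"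
proof -
  have norm_square: "\<And>z. z * cnj z = complex_of_real ((cmod z)\<^sup>2)"
    by (metis complex_norm_square)
  have "hip \<mu> f f = (\<Sum>i\<in>UNIV. LINT x|\<mu>. complex_of_real (\<Sum>j\<in>UNIV. (cmod (f x $ i $ j))\<^sup>2))"
    unfolding hip_def mtrace_def mip_nth norm_square of_real_sum by simp
  then show ?thesis
    by (simp only: of_real_sum[symmetric] integral_complex_of_real)
qed

lemma Re_hip_self_nonneg: "Re (hip \<mu> f f) \<ge> 0"
  by (simp add: hip_self_eq sum_nonneg)

lemma ae_zero_if_Re_hip_self_eq_0:
  assumes f: "f \<in> L2 \<mu>" and zero: "Re (hip \<mu> f f) = 0"
  shows "ae_eq \<mu> f (\<lambda>x. 0)"
proof -
  let ?F = "\<lambda>i x. \<Sum>j\<in>UNIV. (cmod (f x $ i $ j))\<^sup>2"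
  have "(\<Sum>i\<in>UNIV. LINT x|\<mu>. ?F i x) = 0"
    using zero by (simp add: hip_self_eq)
  then have "(LINT x|\<mu>. ?F i x) = 0" for i
    by (simp add: sum_nonneg_eq_0_iff sum_nonneg)
  moreover have "integrable \<mu> (?F i)" for i
    using L2_integrable[OF f] by auto
  ultimately have "AE x in \<mu>. ?F i x = 0" for i
    by (simp add: integral_nonneg_eq_0_iff_AE sum_nonneg)
  then have "AE x in \<mu>. \<forall>i\<in>UNIV. ?F i x = 0"
    by (intro AE_finite_allI) auto
  then show ?thesis
    unfolding ae_eq_def by (rule AE_mp) (auto simp: sum_nonneg_eq_0_iff vec_eq_iff)
qed

lemma ae_eq_if_hip_eq:
  assumes u: "u \<in> L2 \<mu>" and v: "v \<in> L2 \<mu>" and eq: "\<And>g. g \<in> L2 \<mu> \<Longrightarrow> hip \<mu> u g = hip \<mu> v g"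
  shows "ae_eq \<mu> u v"
proof -
  have d: "msub u v \<in> L2 \<mu>"
    using u v by (rule msub_L2)
  then have "hip \<mu> (msub u v) (msub u v) = 0"
    using u v eq by (simp add: hip_msub_left)
  then show ?thesis
    using ae_zero_if_Re_hip_self_eq_0[OF d] by (simp add: ae_eq_if_msub_ae_zero)
qed

lemma abs_Re_hip_le:
  assumes f: "f \<in> L2 \<mu>" and g: "g \<in> L2 \<mu>"
  shows "\<bar>Re (hip \<mu> f g)\<bar> \<le> L2norm \<mu> f * L2norm \<mu> g"
proof -
  define a b c where "a = Re (hip \<mu> f f)" and "b = Re (hip \<mu> f g)" and "c = Re (hip \<mu> g g)"
  have a: "a \<ge> 0" and c: "c \<ge> 0"
    by (simp_all add: a_def c_def Re_hip_self_nonneg)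
  have quadratic: "0 \<le> a + 2 * t * b + t\<^sup>2 * c" for t :: real
  proof -
    let ?h = "madd f (msmult (complex_of_real t) g)"
    have "hip \<mu> ?h ?h = hip \<mu> f f + t * hip \<mu> f g + t * hip \<mu> g f + t * t * hip \<mu> g g"
      using f g by (simp add: hip_madd_left hip_madd_right hip_msmult_left hip_msmult_right
          msmult_L2 madd_L2 algebra_simps)
    then have "Re (hip \<mu> ?h ?h) = a + 2 * t * b + t\<^sup>2 * c"
      by (simp add: a_def b_def c_def hip_commute[of \<mu> g f] power2_eq_square)
    then show ?thesis
      using Re_hip_self_nonneg[of \<mu> ?h] by simp
  qed
  have "b\<^sup>2 \<le> a * c"
  proof (cases "c = 0")
    case True
    then have "ae_eq \<mu> g (\<lambda>x. 0)"
      using ae_zero_if_Re_hip_self_eq_0[OF g] by (simp add: c_def)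
    then show ?thesis
      using hip_ae_zero_right[OF f g] a c by (simp add: b_def)
  next
    case False
    then have "c > 0" using c by simp
    moreover have "0 \<le> a + 2 * (- b / c) * b + (- b / c)\<^sup>2 * c"
      by (rule quadratic)
    ultimately show ?thesis
      by (simp add: power2_eq_square field_simps)
  qed
  then show ?thesis
    using real_sqrt_le_mono[of "b\<^sup>2" "a * c"]
    by (simp add: a_def b_def c_def L2norm_def real_sqrt_mult)
qed

section \<open>Operators defined up to null functions\<close>

definition linear_op :: "'g measure \<Rightarrow> (('g, 'r::finite, 's::finite) mfun \<Rightarrow> ('g, 'r, 's) mfun) \<Rightarrow> bool" where
  "linear_op \<mu> X \<longleftrightarrow> (\<forall>f\<in>L2 \<mu>. X f \<in> L2 \<mu>) \<and>
     (\<forall>f\<in>L2 \<mu>. \<forall>g\<in>L2 \<mu>. ae_eq \<mu> f g \<longrightarrow> ae_eq \<mu> (X f) (X g)) \<and>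
     (\<forall>f\<in>L2 \<mu>. \<forall>g\<in>L2 \<mu>. \<forall>a b.
        ae_eq \<mu> (X (madd (msmult a f) (msmult b g))) (madd (msmult a (X f)) (msmult b (X g))))"

definition selfadjoint_op :: "'g measure \<Rightarrow> (('g, 'r::finite, 's::finite) mfun \<Rightarrow> ('g, 'r, 's) mfun) \<Rightarrow> bool" where
  "selfadjoint_op \<mu> X \<longleftrightarrow> (\<forall>f\<in>L2 \<mu>. \<forall>g\<in>L2 \<mu>. hip \<mu> (X f) g = hip \<mu> f (X g))"

definition nonneg_op :: "'g measure \<Rightarrow> (('g, 'r::finite, 's::finite) mfun \<Rightarrow> ('g, 'r, 's) mfun) \<Rightarrow> bool" where
  "nonneg_op \<mu> X \<longleftrightarrow> (\<forall>f\<in>L2 \<mu>. Re (hip \<mu> (X f) f) \<ge> 0)"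

definition commuting_ops :: "'g measure \<Rightarrow> (('g, 'r::finite, 's::finite) mfun \<Rightarrow> ('g, 'r, 's) mfun)
    \<Rightarrow> (('g, 'r, 's) mfun \<Rightarrow> ('g, 'r, 's) mfun) \<Rightarrow> bool" where
  "commuting_ops \<mu> X Y \<longleftrightarrow> (\<forall>f\<in>L2 \<mu>. ae_eq \<mu> (X (Y f)) (Y (X f)))"

lemma bounded_linear_op_iff:
  "bounded_linear_op \<mu> X \<longleftrightarrow> linear_op \<mu> X \<and> (\<exists>C. \<forall>f\<in>L2 \<mu>. L2norm \<mu> (X f) \<le> C * L2norm \<mu> f)"
  unfolding bounded_linear_op_def linear_op_def ae_eq_def by blast

lemma Im_hip_self_eq_0:
  assumes "selfadjoint_op \<mu> X" "f \<in> L2 \<mu>"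
  shows "Im (hip \<mu> (X f) f) = 0"
proof -
  have "hip \<mu> (X f) f = cnj (hip \<mu> (X f) f)"
    using assms hip_commute[of \<mu> "X f" f] by (simp add: selfadjoint_op_def)
  then have "Im (hip \<mu> (X f) f) = Im (cnj (hip \<mu> (X f) f))"
    by simp
  then show ?thesis
    by simp
qed

lemma positive_op_iff:
  "positive_op \<mu> X \<longleftrightarrow> bounded_linear_op \<mu> X \<and> selfadjoint_op \<mu> X \<and> nonneg_op \<mu> X"
  using Im_hip_self_eq_0[of \<mu> X]
  unfolding positive_op_def is_adjoint_def selfadjoint_op_def nonneg_op_def by blast

lemma linear_op_L2: "linear_op \<mu> X \<Longrightarrow> f \<in> L2 \<mu> \<Longrightarrow> X f \<in> L2 \<mu>"
  unfolding linear_op_def by blast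

lemma linear_op_ae_cong: "linear_op \<mu> X \<Longrightarrow> f \<in> L2 \<mu> \<Longrightarrow> g \<in> L2 \<mu> \<Longrightarrow> ae_eq \<mu> f g \<Longrightarrow> ae_eq \<mu> (X f) (X g)"
  unfolding linear_op_def by blast

lemma linear_op_linear:
  "linear_op \<mu> X \<Longrightarrow> f \<in> L2 \<mu> \<Longrightarrow> g \<in> L2 \<mu> \<Longrightarrow>
    ae_eq \<mu> (X (madd (msmult a f) (msmult b g))) (madd (msmult a (X f)) (msmult b (X g)))"
  unfolding linear_op_def by blast

lemma linear_op_madd: "linear_op \<mu> X \<Longrightarrow> f \<in> L2 \<mu> \<Longrightarrow> g \<in> L2 \<mu> \<Longrightarrow> ae_eq \<mu> (X (madd f g)) (madd (X f) (X g))"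
  using linear_op_linear[of \<mu> X f g 1 1] by simp

lemma linear_op_msub: "linear_op \<mu> X \<Longrightarrow> f \<in> L2 \<mu> \<Longrightarrow> g \<in> L2 \<mu> \<Longrightarrow> ae_eq \<mu> (X (msub f g)) (msub (X f) (X g))"
  using linear_op_linear[of \<mu> X f g 1 "-1"] by (simp add: msub_def)

lemma linear_op_msmult:
  assumes "linear_op \<mu> X" "f \<in> L2 \<mu>"
  shows "ae_eq \<mu> (X (msmult c f)) (msmult c (X f))"
proof -
  have drop_zero: "\<And>h. madd (msmult c h) (msmult 0 h) = msmult c h"
    by (simp add: madd_def msmult_def vec_eq_iff)
  show ?thesis
    using linear_op_linear[OF assms assms(2), of c 0] by (simp only: drop_zero)
qed

lemma linear_op_comp:
  fixes X Y :: "('g, 'r::finite, 's::finite) mfun \<Rightarrow> ('g, 'r, 's) mfun"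
  assumes X: "linear_op \<mu> X" and Y: "linear_op \<mu> Y"
  shows "linear_op \<mu> (\<lambda>f. X (Y f))"
  unfolding linear_op_def
proof (intro conjI ballI allI impI)
  fix f g :: "('g, 'r, 's) mfun" and a b :: complex
  assume f: "f \<in> L2 \<mu>" and g: "g \<in> L2 \<mu>"
  have "ae_eq \<mu> (X (Y (madd (msmult a f) (msmult b g)))) (X (madd (msmult a (Y f)) (msmult b (Y g))))"
    using f g by (intro linear_op_ae_cong[OF X] linear_op_linear[OF Y])
      (auto intro: madd_L2 msmult_L2 linear_op_L2[OF Y])
  also have "ae_eq \<mu> \<dots> (madd (msmult a (X (Y f))) (msmult b (X (Y g))))"
    using f g by (intro linear_op_linear[OF X] linear_op_L2[OF Y])
  finally show "ae_eq \<mu> (X (Y (madd (msmult a f) (msmult b g)))) (madd (msmult a (X (Y f))) (msmult b (X (Y g))))" .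
qed (use X Y in \<open>auto intro: linear_op_L2 linear_op_ae_cong\<close>)

lemma linear_op_diff:
  fixes X Y :: "('g, 'r::finite, 's::finite) mfun \<Rightarrow> ('g, 'r, 's) mfun"
  assumes X: "linear_op \<mu> X" and Y: "linear_op \<mu> Y"
  shows "linear_op \<mu> (\<lambda>f. msub (X f) (Y f))"
  unfolding linear_op_def
proof (intro conjI ballI allI impI)
  fix f g :: "('g, 'r, 's) mfun" and a b :: complex
  assume f: "f \<in> L2 \<mu>" and g: "g \<in> L2 \<mu>"
  have "msub (madd (msmult a (X f)) (msmult b (X g))) (madd (msmult a (Y f)) (msmult b (Y g)))
      = madd (msmult a (msub (X f) (Y f))) (msmult b (msub (X g) (Y g)))"
    by (simp add: msub_def madd_def msmult_def vec_eq_iff algebra_simps)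
  then show "ae_eq \<mu> (msub (X (madd (msmult a f) (msmult b g))) (Y (madd (msmult a f) (msmult b g))))
      (madd (msmult a (msub (X f) (Y f))) (msmult b (msub (X g) (Y g))))"
    using ae_eq_msub[OF linear_op_linear[OF X f g, where a = a and b = b]
        linear_op_linear[OF Y f g, where a = a and b = b]] by simp
qed (use X Y in \<open>auto intro: linear_op_L2 linear_op_ae_cong msub_L2 ae_eq_msub\<close>)

lemma linear_op_scaled:
  fixes X :: "('g, 'r::finite, 's::finite) mfun \<Rightarrow> ('g, 'r, 's) mfun"
  assumes X: "linear_op \<mu> X"
  shows "linear_op \<mu> (\<lambda>f. msmult c (X f))"
  unfolding linear_op_def
proof (intro conjI ballI allI impI)
  fix f g :: "('g, 'r, 's) mfun" and a b :: complex
  assume f: "f \<in> L2 \<mu>" and g: "g \<in> L2 \<mu>"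
  have "msmult c (madd (msmult a (X f)) (msmult b (X g)))
      = madd (msmult a (msmult c (X f))) (msmult b (msmult c (X g)))"
    by (simp add: madd_def msmult_def vec_eq_iff algebra_simps)
  then show "ae_eq \<mu> (msmult c (X (madd (msmult a f) (msmult b g))))
      (madd (msmult a (msmult c (X f))) (msmult b (msmult c (X g))))"
    using ae_eq_msmult[OF linear_op_linear[OF X f g, where a = a and b = b], of c] by simp
qed (use X in \<open>auto intro: linear_op_L2 linear_op_ae_cong msmult_L2 ae_eq_msmult\<close>)

lemma ae_zero_if_selfadjoint_form_zero:
  assumes M: "linear_op \<mu> M" "selfadjoint_op \<mu> M"
    and form: "\<And>x. x \<in> L2 \<mu> \<Longrightarrow> Re (hip \<mu> (M x) x) = 0" and x: "x \<in> L2 \<mu>"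
  shows "ae_eq \<mu> (M x) (\<lambda>x. 0)"
proof -
  define y where "y = M x"
  have y: "y \<in> L2 \<mu>" and My: "M y \<in> L2 \<mu>"
    using x by (simp_all add: y_def linear_op_L2[OF M(1)])
  have "0 = Re (hip \<mu> (M (madd x y)) (madd x y))"
    using form x y by (simp add: madd_L2)
  also have "hip \<mu> (M (madd x y)) (madd x y) = hip \<mu> (madd y (M y)) (madd x y)"
  proof (rule hip_ae_cong_left)
    show "ae_eq \<mu> (M (madd x y)) (madd y (M y))"
      using linear_op_madd[OF M(1) x y] by (simp add: y_def)
  qed (use x y My in \<open>auto simp: madd_L2 linear_op_L2[OF M(1)]\<close>)
  also have "\<dots> = hip \<mu> y x + hip \<mu> y y + hip \<mu> (M y) x + hip \<mu> (M y) y"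
    using x y My by (simp add: hip_madd_left hip_madd_right madd_L2)
  also have "hip \<mu> (M y) x = hip \<mu> y y"
    using M(2) x y by (simp add: selfadjoint_op_def y_def)
  finally have "Re (hip \<mu> y y) = 0"
    using form[OF x] form[OF y] by (simp add: y_def)
  then show ?thesis
    using ae_zero_if_Re_hip_self_eq_0[OF y] by (simp add: y_def)
qed

lemma ae_zero_if_selfadjoint_square_ae_zero:
  assumes X: "linear_op \<mu> X" "selfadjoint_op \<mu> X" and x: "x \<in> L2 \<mu>"
    and zero: "ae_eq \<mu> (X (X x)) (\<lambda>x. 0)"
  shows "ae_eq \<mu> (X x) (\<lambda>x. 0)"
proof -
  have "hip \<mu> (X x) (X x) = hip \<mu> x (X (X x))"
    using X x by (simp add: selfadjoint_op_def linear_op_L2)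
  also have "\<dots> = 0"
    using X x zero by (intro hip_ae_zero_right) (auto intro: linear_op_L2)
  finally show ?thesis
    using ae_zero_if_Re_hip_self_eq_0[OF linear_op_L2[OF X(1) x]] by simp
qed

section \<open>Products of commuting positive operators\<close>

definition form_in_unit_interval :: "'g measure \<Rightarrow> (('g, 'r::finite, 's::finite) mfun \<Rightarrow> ('g, 'r, 's) mfun) \<Rightarrow> bool" where
  "form_in_unit_interval \<mu> X \<longleftrightarrow>
     (\<forall>f\<in>L2 \<mu>. 0 \<le> Re (hip \<mu> (X f) f) \<and> Re (hip \<mu> (X f) f) \<le> Re (hip \<mu> f f))"

primrec sub_square_iter :: "(('g, 'r::finite, 's::finite) mfun \<Rightarrow> ('g, 'r, 's) mfun) \<Rightarrow> nat
    \<Rightarrow> ('g, 'r, 's) mfun \<Rightarrow> ('g, 'r, 's) mfun" where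
  "sub_square_iter P 0 = P"
| "sub_square_iter P (Suc n) = (\<lambda>f. msub (sub_square_iter P n f) (sub_square_iter P n (sub_square_iter P n f)))"

lemma Re_hip_sub_square:
  assumes X: "linear_op \<mu> X" "selfadjoint_op \<mu> X" and x: "x \<in> L2 \<mu>"
  shows "Re (hip \<mu> (msub (X x) (X (X x))) x) = Re (hip \<mu> (X x) x) - Re (hip \<mu> (X x) (X x))"
proof -
  have "hip \<mu> (X (X x)) x = hip \<mu> (X x) (X x)"
    using X x by (simp add: selfadjoint_op_def linear_op_L2)
  then show ?thesis
    using X x by (simp add: hip_msub_left linear_op_L2)
qed

lemma selfadjoint_sub_square:
  fixes X :: "('g, 'r::finite, 's::finite) mfun \<Rightarrow> ('g, 'r, 's) mfun"
  assumes X: "linear_op \<mu> X" "selfadjoint_op \<mu> X"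
  shows "selfadjoint_op \<mu> (\<lambda>f. msub (X f) (X (X f)))"
  unfolding selfadjoint_op_def
proof (intro ballI)
  fix f g :: "('g, 'r, 's) mfun"
  assume f: "f \<in> L2 \<mu>" and g: "g \<in> L2 \<mu>"
  have L2: "X f \<in> L2 \<mu>" "X (X f) \<in> L2 \<mu>" "X g \<in> L2 \<mu>" "X (X g) \<in> L2 \<mu>"
    using f g by (simp_all add: linear_op_L2[OF X(1)])
  have "hip \<mu> (msub (X f) (X (X f))) g = hip \<mu> (X f) g - hip \<mu> (X (X f)) g"
    using L2 g by (simp add: hip_msub_left)
  also have "\<dots> = hip \<mu> f (X g) - hip \<mu> f (X (X g))"
    using X(2) L2 f g by (simp add: selfadjoint_op_def)
  also have "\<dots> = hip \<mu> f (msub (X g) (X (X g)))"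
    using L2 f by (simp add: hip_msub_right)
  finally show "hip \<mu> (msub (X f) (X (X f))) g = hip \<mu> f (msub (X g) (X (X g)))" .
qed

lemma commuting_sub_square:
  fixes X Q :: "('g, 'r::finite, 's::finite) mfun \<Rightarrow> ('g, 'r, 's) mfun"
  assumes X: "linear_op \<mu> X" and Q: "linear_op \<mu> Q" and comm: "commuting_ops \<mu> X Q"
  shows "commuting_ops \<mu> (\<lambda>f. msub (X f) (X (X f))) Q"
  unfolding commuting_ops_def
proof
  fix x :: "('g, 'r, 's) mfun"
  assume x: "x \<in> L2 \<mu>"
  have XQ: "\<And>u. u \<in> L2 \<mu> \<Longrightarrow> ae_eq \<mu> (X (Q u)) (Q (X u))"
    using comm by (simp add: commuting_ops_def)
  have L2: "X x \<in> L2 \<mu>" "X (X x) \<in> L2 \<mu>" "Q x \<in> L2 \<mu>" "X (Q x) \<in> L2 \<mu>" "Q (X x) \<in> L2 \<mu>"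
    using x by (simp_all add: linear_op_L2[OF X] linear_op_L2[OF Q])
  have "ae_eq \<mu> (X (X (Q x))) (X (Q (X x)))"
    using L2 XQ[OF x] by (intro linear_op_ae_cong[OF X])
  also have "ae_eq \<mu> \<dots> (Q (X (X x)))"
    using XQ[OF L2(1)] .
  finally have "ae_eq \<mu> (msub (X (Q x)) (X (X (Q x)))) (msub (Q (X x)) (Q (X (X x))))"
    using XQ[OF x] by (intro ae_eq_msub)
  also have "ae_eq \<mu> \<dots> (Q (msub (X x) (X (X x))))"
    using ae_eq_sym[OF linear_op_msub[OF Q L2(1,2)]] .
  finally show "ae_eq \<mu> (msub (X (Q x)) (X (X (Q x)))) (Q (msub (X x) (X (X x))))" .
qed

lemma form_in_unit_interval_sub_square:
  fixes X :: "('g, 'r::finite, 's::finite) mfun \<Rightarrow> ('g, 'r, 's) mfun"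
  assumes X: "linear_op \<mu> X" "selfadjoint_op \<mu> X" "form_in_unit_interval \<mu> X"
  shows "form_in_unit_interval \<mu> (\<lambda>f. msub (X f) (X (X f)))"
  unfolding form_in_unit_interval_def
proof
  fix x :: "('g, 'r, 's) mfun"
  assume x: "x \<in> L2 \<mu>"
  have bounds: "\<And>y. y \<in> L2 \<mu> \<Longrightarrow> 0 \<le> Re (hip \<mu> (X y) y) \<and> Re (hip \<mu> (X y) y) \<le> Re (hip \<mu> y y)"
    using X(3) by (simp add: form_in_unit_interval_def)
  have L2: "X x \<in> L2 \<mu>" "X (X x) \<in> L2 \<mu>"
    using x by (simp_all add: linear_op_L2[OF X(1)])
  define z where "z = msub x (X x)"
  have z: "z \<in> L2 \<mu>" and Xz: "X z \<in> L2 \<mu>"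
    using L2 x by (simp_all add: z_def msub_L2 linear_op_L2[OF X(1)])
  have "hip \<mu> (X z) z = hip \<mu> (msub (X x) (X (X x))) z"
    using Xz L2 z by (intro hip_ae_cong_left) (auto simp: z_def msub_L2 linear_op_msub[OF X(1) x])
  also have "\<dots> = hip \<mu> (X x) x - hip \<mu> (X x) (X x) - hip \<mu> (X (X x)) x + hip \<mu> (X (X x)) (X x)"
    using L2 x by (simp add: z_def hip_msub_left hip_msub_right msub_L2)
  also have "hip \<mu> (X (X x)) x = hip \<mu> (X x) (X x)"
    using X(2) L2 x by (simp add: selfadjoint_op_def)
  finally have "Re (hip \<mu> (X z) z) = Re (hip \<mu> (X x) x) - 2 * Re (hip \<mu> (X x) (X x)) + Re (hip \<mu> (X (X x)) (X x))"
    by simp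
  then show "0 \<le> Re (hip \<mu> (msub (X x) (X (X x))) x) \<and> Re (hip \<mu> (msub (X x) (X (X x))) x) \<le> Re (hip \<mu> x x)"
    using Re_hip_sub_square[OF X(1,2) x] bounds[OF z] bounds[OF L2(1)] bounds[OF x]
      Re_hip_self_nonneg[of \<mu> "X x"] by linarith
qed

lemma linear_op_sub_square_iter: "linear_op \<mu> P \<Longrightarrow> linear_op \<mu> (sub_square_iter P n)"
  by (induction n) (simp_all add: linear_op_diff linear_op_comp)

lemma selfadjoint_sub_square_iter:
  "linear_op \<mu> P \<Longrightarrow> selfadjoint_op \<mu> P \<Longrightarrow> selfadjoint_op \<mu> (sub_square_iter P n)"
  by (induction n) (simp_all add: selfadjoint_sub_square linear_op_sub_square_iter)

lemma form_in_unit_interval_sub_square_iter: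
  "linear_op \<mu> P \<Longrightarrow> selfadjoint_op \<mu> P \<Longrightarrow> form_in_unit_interval \<mu> P \<Longrightarrow>
    form_in_unit_interval \<mu> (sub_square_iter P n)"
  by (induction n)
    (simp_all add: form_in_unit_interval_sub_square linear_op_sub_square_iter selfadjoint_sub_square_iter)

lemma commuting_sub_square_iter:
  "linear_op \<mu> P \<Longrightarrow> linear_op \<mu> Q \<Longrightarrow> commuting_ops \<mu> P Q \<Longrightarrow> commuting_ops \<mu> (sub_square_iter P n) Q"
  by (induction n) (simp_all add: commuting_sub_square linear_op_sub_square_iter)

text \<open>The telescoping identity \<open>P = P_n + (\<Sum>k<n. P_k\<^sup>2)\<close> bounds the squared norms of the \<open>P_k x\<close>.\<close>

lemma sum_Re_hip_sub_square_iter_le: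
  assumes P: "linear_op \<mu> P" "selfadjoint_op \<mu> P" "form_in_unit_interval \<mu> P" and x: "x \<in> L2 \<mu>"
  shows "(\<Sum>k<n. Re (hip \<mu> (sub_square_iter P k x) (sub_square_iter P k x))) \<le> Re (hip \<mu> x x)"
proof -
  let ?P = "sub_square_iter P"
  have telescope: "Re (hip \<mu> (P x) x) = (\<Sum>k<n. Re (hip \<mu> (?P k x) (?P k x))) + Re (hip \<mu> (?P n x) x)" for n
  proof (induction n)
    case (Suc n)
    have "Re (hip \<mu> (?P (Suc n) x) x) = Re (hip \<mu> (?P n x) x) - Re (hip \<mu> (?P n x) (?P n x))"
      using Re_hip_sub_square[OF linear_op_sub_square_iter[OF P(1)] selfadjoint_sub_square_iter[OF P(1,2)] x]
      by simp
    with Suc show ?case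
      by simp
  qed simp
  have "0 \<le> Re (hip \<mu> (?P n x) x)" and "Re (hip \<mu> (P x) x) \<le> Re (hip \<mu> x x)"
    using form_in_unit_interval_sub_square_iter[OF P, of n] P(3) x
    by (simp_all add: form_in_unit_interval_def)
  with telescope[of n] show ?thesis
    by linarith
qed

lemma Re_hip_comp_sub_square_iter_le:
  assumes P: "linear_op \<mu> P" "selfadjoint_op \<mu> P"
    and Q: "linear_op \<mu> Q" "nonneg_op \<mu> Q" and comm: "commuting_ops \<mu> P Q" and x: "x \<in> L2 \<mu>"
  shows "Re (hip \<mu> (Q (sub_square_iter P n x)) x) \<le> Re (hip \<mu> (Q (P x)) x)"
proof (induction n)
  case (Suc n)
  let ?X = "sub_square_iter P n"
  have X: "linear_op \<mu> ?X" "selfadjoint_op \<mu> ?X" "commuting_ops \<mu> ?X Q"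
    using linear_op_sub_square_iter[OF P(1)] selfadjoint_sub_square_iter[OF P]
      commuting_sub_square_iter[OF P(1) Q(1) comm] by auto
  have L2: "?X x \<in> L2 \<mu>" "?X (?X x) \<in> L2 \<mu>" "Q (?X x) \<in> L2 \<mu>" "Q (?X (?X x)) \<in> L2 \<mu>" "?X (Q (?X x)) \<in> L2 \<mu>"
    using x by (simp_all add: linear_op_L2[OF X(1)] linear_op_L2[OF Q(1)])
  have "hip \<mu> (Q (msub (?X x) (?X (?X x)))) x = hip \<mu> (msub (Q (?X x)) (Q (?X (?X x)))) x"
    using L2 x by (intro hip_ae_cong_left linear_op_msub[OF Q(1)]) (auto intro: msub_L2 linear_op_L2[OF Q(1)])
  also have "\<dots> = hip \<mu> (Q (?X x)) x - hip \<mu> (Q (?X (?X x))) x"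
    using L2 x by (simp add: hip_msub_left)
  finally have step: "hip \<mu> (Q (sub_square_iter P (Suc n) x)) x = hip \<mu> (Q (?X x)) x - hip \<mu> (Q (?X (?X x))) x"
    by simp
  have "hip \<mu> (Q (?X (?X x))) x = hip \<mu> (?X (Q (?X x))) x"
    using X(3) L2 x by (intro hip_ae_cong_left) (auto simp: commuting_ops_def intro: ae_eq_sym)
  also have "\<dots> = hip \<mu> (Q (?X x)) (?X x)"
    using X(2) L2 x by (simp add: selfadjoint_op_def)
  finally have "0 \<le> Re (hip \<mu> (Q (?X (?X x))) x)"
    using Q(2) L2 by (simp add: nonneg_op_def)
  with step Suc show ?case
    by simp
qed simp

lemma Re_hip_comp_nonneg_unit_interval:
  assumes P: "linear_op \<mu> P" "selfadjoint_op \<mu> P" "form_in_unit_interval \<mu> P"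
    and Q: "linear_op \<mu> Q" "selfadjoint_op \<mu> Q" "nonneg_op \<mu> Q"
    and comm: "commuting_ops \<mu> P Q" and x: "x \<in> L2 \<mu>"
  shows "0 \<le> Re (hip \<mu> (Q (P x)) x)"
proof -
  let ?P = "sub_square_iter P"
  have Qx: "Q x \<in> L2 \<mu>" and Px: "\<And>k. ?P k x \<in> L2 \<mu>"
    using x linear_op_L2[OF linear_op_sub_square_iter[OF P(1)]] linear_op_L2[OF Q(1)] by auto
  have "summable (\<lambda>k. Re (hip \<mu> (?P k x) (?P k x)))"
    by (rule summableI_nonneg_bounded[OF Re_hip_self_nonneg sum_Re_hip_sub_square_iter_le[OF P x]])
  then have "(\<lambda>k. sqrt (Re (hip \<mu> (?P k x) (?P k x)))) \<longlonglongrightarrow> sqrt 0"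
    by (intro tendsto_real_sqrt summable_LIMSEQ_zero)
  then have "(\<lambda>k. L2norm \<mu> (Q x) * L2norm \<mu> (?P k x)) \<longlonglongrightarrow> 0"
    unfolding L2norm_def by (intro tendsto_mult_right_zero) simp
  then have lim: "(\<lambda>k. - (L2norm \<mu> (Q x) * L2norm \<mu> (?P k x))) \<longlonglongrightarrow> 0"
    using tendsto_minus by fastforce
  have "- (L2norm \<mu> (Q x) * L2norm \<mu> (?P k x)) \<le> Re (hip \<mu> (Q (P x)) x)" for k
  proof -
    have "- (L2norm \<mu> (Q x) * L2norm \<mu> (?P k x)) \<le> Re (hip \<mu> (?P k x) (Q x))"
      using abs_Re_hip_le[OF Px[of k] Qx] by (simp add: abs_le_iff mult.commute)
    also have "\<dots> = Re (hip \<mu> (Q (?P k x)) x)"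
      using Q(2) Px x by (simp add: selfadjoint_op_def)
    also have "\<dots> \<le> Re (hip \<mu> (Q (P x)) x)"
      by (rule Re_hip_comp_sub_square_iter_le[OF P(1,2) Q(1,3) comm x])
    finally show ?thesis .
  qed
  then show ?thesis
    by (intro LIMSEQ_le_const2[OF lim]) simp
qed

lemma Re_hip_le_if_bounded:
  assumes X: "linear_op \<mu> X" and bound: "\<forall>f\<in>L2 \<mu>. L2norm \<mu> (X f) \<le> C * L2norm \<mu> f" and y: "y \<in> L2 \<mu>"
  shows "Re (hip \<mu> (X y) y) \<le> max C 1 * Re (hip \<mu> y y)"
proof -
  have norm_nonneg: "0 \<le> L2norm \<mu> y"
    using Re_hip_self_nonneg[of \<mu> y] by (simp add: L2norm_def)
  have "Re (hip \<mu> (X y) y) \<le> L2norm \<mu> (X y) * L2norm \<mu> y"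
    using abs_Re_hip_le[OF linear_op_L2[OF X y] y] by linarith
  also have "\<dots> \<le> max C 1 * L2norm \<mu> y * L2norm \<mu> y"
  proof (rule mult_right_mono)
    have "L2norm \<mu> (X y) \<le> C * L2norm \<mu> y"
      using bound y by blast
    also have "\<dots> \<le> max C 1 * L2norm \<mu> y"
      using norm_nonneg by (intro mult_right_mono) simp_all
    finally show "L2norm \<mu> (X y) \<le> max C 1 * L2norm \<mu> y" .
  qed (rule norm_nonneg)
  also have "\<dots> = max C 1 * Re (hip \<mu> y y)"
    using Re_hip_self_nonneg[of \<mu> y] by (simp add: L2norm_def)
  finally show ?thesis .
qed

lemma selfadjoint_scaled:
  "linear_op \<mu> P \<Longrightarrow> selfadjoint_op \<mu> P \<Longrightarrow> selfadjoint_op \<mu> (\<lambda>f. msmult (complex_of_real r) (P f))"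
  by (simp add: selfadjoint_op_def hip_msmult_left hip_msmult_right linear_op_L2)

lemma commuting_scaled:
  fixes P Q :: "('g, 'r::finite, 's::finite) mfun \<Rightarrow> ('g, 'r, 's) mfun"
  assumes P: "linear_op \<mu> P" and Q: "linear_op \<mu> Q" and comm: "commuting_ops \<mu> P Q"
  shows "commuting_ops \<mu> (\<lambda>f. msmult c (P f)) Q"
  unfolding commuting_ops_def
proof
  fix y :: "('g, 'r, 's) mfun"
  assume y: "y \<in> L2 \<mu>"
  have "ae_eq \<mu> (msmult c (P (Q y))) (msmult c (Q (P y)))"
    using comm y by (simp add: commuting_ops_def ae_eq_msmult)
  also have "ae_eq \<mu> \<dots> (Q (msmult c (P y)))"
    using ae_eq_sym[OF linear_op_msmult[OF Q linear_op_L2[OF P y]]] .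
  finally show "ae_eq \<mu> (msmult c (P (Q y))) (Q (msmult c (P y)))" .
qed

lemma form_in_unit_interval_scaled:
  fixes P :: "('g, 'r::finite, 's::finite) mfun \<Rightarrow> ('g, 'r, 's) mfun"
  assumes P: "linear_op \<mu> P" "nonneg_op \<mu> P" and bound: "\<forall>f\<in>L2 \<mu>. L2norm \<mu> (P f) \<le> C * L2norm \<mu> f"
  shows "form_in_unit_interval \<mu> (\<lambda>f. msmult (complex_of_real (1 / max C 1)) (P f))"
  unfolding form_in_unit_interval_def
proof
  fix y :: "('g, 'r, 's) mfun"
  assume y: "y \<in> L2 \<mu>"
  define r where "r = 1 / max C 1"
  have r: "0 < r" "r * max C 1 = 1"
    by (simp_all add: r_def)
  have "Re (hip \<mu> (msmult (complex_of_real r) (P y)) y) = r * Re (hip \<mu> (P y) y)"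
    using P(1) y by (simp add: hip_msmult_left linear_op_L2)
  moreover have "0 \<le> Re (hip \<mu> (P y) y)"
    using P(2) y by (simp add: nonneg_op_def)
  moreover have "r * Re (hip \<mu> (P y) y) \<le> r * (max C 1 * Re (hip \<mu> y y))"
    using Re_hip_le_if_bounded[OF P(1) bound y] r by simp
  ultimately show "0 \<le> Re (hip \<mu> (msmult (complex_of_real (1 / max C 1)) (P y)) y) \<and>
      Re (hip \<mu> (msmult (complex_of_real (1 / max C 1)) (P y)) y) \<le> Re (hip \<mu> y y)"
    using r by (simp add: r_def mult.assoc[symmetric])
qed

lemma Re_hip_comp_commuting_nonneg:
  fixes P Q :: "('g, 'r::finite, 's::finite) mfun \<Rightarrow> ('g, 'r, 's) mfun"
  assumes P: "linear_op \<mu> P" "selfadjoint_op \<mu> P" "nonneg_op \<mu> P"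
    and bound: "\<forall>f\<in>L2 \<mu>. L2norm \<mu> (P f) \<le> C * L2norm \<mu> f"
    and Q: "linear_op \<mu> Q" "selfadjoint_op \<mu> Q" "nonneg_op \<mu> Q"
    and comm: "commuting_ops \<mu> P Q" and x: "x \<in> L2 \<mu>"
  shows "0 \<le> Re (hip \<mu> (Q (P x)) x)"
proof -
  define r where "r = 1 / max C 1"
  let ?rP = "\<lambda>f. msmult (complex_of_real r) (P f)"
  have "0 \<le> Re (hip \<mu> (Q (?rP x)) x)"
    using Re_hip_comp_nonneg_unit_interval[OF linear_op_scaled[OF P(1)] selfadjoint_scaled[OF P(1,2)]
        form_in_unit_interval_scaled[OF P(1,3) bound] Q commuting_scaled[OF P(1) Q(1) comm] x]
    by (simp add: r_def)
  also have "hip \<mu> (Q (?rP x)) x = hip \<mu> (msmult (complex_of_real r) (Q (P x))) x"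
    using P(1) Q(1) x
    by (intro hip_ae_cong_left linear_op_msmult) (auto intro: msmult_L2 linear_op_L2)
  also have "\<dots> = r * hip \<mu> (Q (P x)) x"
    using P(1) Q(1) x by (simp add: hip_msmult_left linear_op_L2)
  finally have "0 \<le> Re (hip \<mu> (Q (P x)) x) / max C 1"
    by (simp add: r_def)
  moreover have "0 < max C 1"
    by simp
  ultimately show ?thesis
    by (simp add: zero_le_divide_iff)
qed

section \<open>Uniqueness of positive square roots\<close>

lemma selfadjoint_diff:
  "selfadjoint_op \<mu> W \<Longrightarrow> selfadjoint_op \<mu> V \<Longrightarrow> linear_op \<mu> W \<Longrightarrow> linear_op \<mu> V \<Longrightarrow>
    selfadjoint_op \<mu> (\<lambda>f. msub (W f) (V f))"
  by (simp add: selfadjoint_op_def hip_msub_left hip_msub_right linear_op_L2)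

lemma selfadjoint_square: "selfadjoint_op \<mu> D \<Longrightarrow> linear_op \<mu> D \<Longrightarrow> selfadjoint_op \<mu> (\<lambda>f. D (D f))"
  by (simp add: selfadjoint_op_def linear_op_L2)

lemma nonneg_square:
  fixes D :: "('g, 'r::finite, 's::finite) mfun \<Rightarrow> ('g, 'r, 's) mfun"
  assumes "selfadjoint_op \<mu> D" "linear_op \<mu> D"
  shows "nonneg_op \<mu> (\<lambda>f. D (D f))"
  unfolding nonneg_op_def
proof
  fix f :: "('g, 'r, 's) mfun"
  assume f: "f \<in> L2 \<mu>"
  have "hip \<mu> (D (D f)) f = hip \<mu> (D f) (D f)"
    using assms(1) linear_op_L2[OF assms(2) f] f unfolding selfadjoint_op_def by blast
  then show "0 \<le> Re (hip \<mu> (D (D f)) f)"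
    by (simp add: Re_hip_self_nonneg)
qed

lemma sqrt_diff_intertwines:
  assumes W: "linear_op \<mu> W" and V: "linear_op \<mu> V"
    and sq: "\<And>f. f \<in> L2 \<mu> \<Longrightarrow> ae_eq \<mu> (W (W f)) (V (V f))" and y: "y \<in> L2 \<mu>"
  shows "ae_eq \<mu> (W (msub (W y) (V y))) (msmult (-1) (msub (W (V y)) (V (V y))))"
    and "ae_eq \<mu> (V (msub (W y) (V y))) (msmult (-1) (msub (W (W y)) (V (W y))))"
proof -
  have L2: "W y \<in> L2 \<mu>" "V y \<in> L2 \<mu>"
    using y by (simp_all add: linear_op_L2[OF W] linear_op_L2[OF V])
  have "ae_eq \<mu> (W (msub (W y) (V y))) (msub (W (W y)) (W (V y)))"
    using L2 by (rule linear_op_msub[OF W])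
  also have "ae_eq \<mu> \<dots> (msub (V (V y)) (W (V y)))"
    using sq[OF y] by (intro ae_eq_msub) simp_all
  also have "msub (V (V y)) (W (V y)) = msmult (-1) (msub (W (V y)) (V (V y)))"
    by (simp add: msub_def madd_def msmult_def vec_eq_iff)
  finally show "ae_eq \<mu> (W (msub (W y) (V y))) (msmult (-1) (msub (W (V y)) (V (V y))))" .
  have "ae_eq \<mu> (V (msub (W y) (V y))) (msub (V (W y)) (V (V y)))"
    using L2 by (rule linear_op_msub[OF V])
  also have "ae_eq \<mu> \<dots> (msub (V (W y)) (W (W y)))"
    using sq[OF y] by (intro ae_eq_msub ae_eq_refl) (rule ae_eq_sym)
  also have "msub (V (W y)) (W (W y)) = msmult (-1) (msub (W (W y)) (V (W y)))"
    by (simp add: msub_def madd_def msmult_def vec_eq_iff)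
  finally show "ae_eq \<mu> (V (msub (W y) (V y))) (msmult (-1) (msub (W (W y)) (V (W y))))" .
qed

lemma commuting_square_if_intertwines:
  fixes W V D :: "('g, 'r::finite, 's::finite) mfun \<Rightarrow> ('g, 'r, 's) mfun"
  assumes D: "linear_op \<mu> D" and W: "linear_op \<mu> W" and V: "linear_op \<mu> V"
    and WD: "\<forall>y\<in>L2 \<mu>. ae_eq \<mu> (W (D y)) (msmult (-1) (D (V y)))"
    and VD: "\<forall>y\<in>L2 \<mu>. ae_eq \<mu> (V (D y)) (msmult (-1) (D (W y)))"
  shows "commuting_ops \<mu> W (\<lambda>f. D (D f))"
  unfolding commuting_ops_def
proof
  fix y :: "('g, 'r, 's) mfun"
  assume y: "y \<in> L2 \<mu>"
  have L2: "D y \<in> L2 \<mu>" "V (D y) \<in> L2 \<mu>" "D (W y) \<in> L2 \<mu>"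
    using y by (simp_all add: linear_op_L2[OF D] linear_op_L2[OF V] linear_op_L2[OF W])
  have "ae_eq \<mu> (W (D (D y))) (msmult (-1) (D (V (D y))))"
    using WD L2(1) by blast
  also have "ae_eq \<mu> \<dots> (msmult (-1) (D (msmult (-1) (D (W y)))))"
    using L2 VD y by (intro ae_eq_msmult linear_op_ae_cong[OF D]) (simp_all add: msmult_L2)
  also have "ae_eq \<mu> \<dots> (msmult (-1) (msmult (-1) (D (D (W y)))))"
    using L2 by (intro ae_eq_msmult linear_op_msmult[OF D])
  finally show "ae_eq \<mu> (W (D (D y))) (D (D (W y)))"
    by (simp add: msmult_msmult)
qed

lemma Re_hip_intertwined_square_eq_0:
  fixes W V D :: "('g, 'r::finite, 's::finite) mfun \<Rightarrow> ('g, 'r, 's) mfun"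
  assumes W: "positive_op \<mu> W" and V: "linear_op \<mu> V" "nonneg_op \<mu> V"
    and D: "linear_op \<mu> D" "selfadjoint_op \<mu> D"
    and comm: "commuting_ops \<mu> W (\<lambda>f. D (D f))"
    and VD: "\<forall>y\<in>L2 \<mu>. ae_eq \<mu> (V (D y)) (msmult (-1) (D (W y)))"
    and y: "y \<in> L2 \<mu>"
  shows "Re (hip \<mu> (D (D (W y))) y) = 0"
proof -
  obtain C where W': "linear_op \<mu> W" "selfadjoint_op \<mu> W" "nonneg_op \<mu> W"
    and bound: "\<forall>f\<in>L2 \<mu>. L2norm \<mu> (W f) \<le> C * L2norm \<mu> f"
    using W by (auto simp: positive_op_iff bounded_linear_op_iff)
  have L2: "D y \<in> L2 \<mu>" "W y \<in> L2 \<mu>" "D (W y) \<in> L2 \<mu>" "V (D y) \<in> L2 \<mu>"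
    using y by (simp_all add: linear_op_L2[OF D(1)] linear_op_L2[OF W'(1)] linear_op_L2[OF V(1)])
  have "0 \<le> Re (hip \<mu> (D (D (W y))) y)"
    using Re_hip_comp_commuting_nonneg[OF W' bound linear_op_comp[OF D(1) D(1)]
        selfadjoint_square[OF D(2,1)] nonneg_square[OF D(2,1)] comm y] .
  moreover have "hip \<mu> (D (D (W y))) y = - hip \<mu> (V (D y)) (D y)"
  proof -
    have "hip \<mu> (V (D y)) (D y) = hip \<mu> (msmult (-1) (D (W y))) (D y)"
      using L2 VD y by (intro hip_ae_cong_left) (simp_all add: msmult_L2)
    also have "\<dots> = - hip \<mu> (D (D (W y))) y"
      using D(2) L2 y by (simp add: hip_msmult_left selfadjoint_op_def)
    finally show ?thesis
      by simp
  qed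
  moreover have "0 \<le> Re (hip \<mu> (V (D y)) (D y))"
    using V(2) L2 by (simp add: nonneg_op_def)
  ultimately show ?thesis
    by simp
qed

lemma ae_zero_if_selfadjoint_cube_form_zero:
  fixes D :: "('g, 'r::finite, 's::finite) mfun \<Rightarrow> ('g, 'r, 's) mfun"
  assumes D: "linear_op \<mu> D" "selfadjoint_op \<mu> D"
    and form: "\<And>y. y \<in> L2 \<mu> \<Longrightarrow> Re (hip \<mu> (D (D (D y))) y) = 0" and x: "x \<in> L2 \<mu>"
  shows "ae_eq \<mu> (D x) (\<lambda>x. 0)"
proof -
  have D3: "linear_op \<mu> (\<lambda>f. D (D (D f)))" "selfadjoint_op \<mu> (\<lambda>f. D (D (D f)))"
    using D linear_op_comp[OF D(1) linear_op_comp[OF D(1) D(1)]]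
    by (simp_all add: selfadjoint_op_def linear_op_L2)
  have "ae_eq \<mu> (D (D (D x))) (\<lambda>x. 0)"
    using ae_zero_if_selfadjoint_form_zero[OF D3 form x] .
  then have "ae_eq \<mu> (D (D x)) (\<lambda>x. 0)"
    by (rule ae_zero_if_selfadjoint_square_ae_zero[OF D linear_op_L2[OF D(1) x]])
  then show ?thesis
    by (rule ae_zero_if_selfadjoint_square_ae_zero[OF D x])
qed

lemma positive_sqrt_unique:
  fixes W V :: "('g, 'r::finite, 's::finite) mfun \<Rightarrow> ('g, 'r, 's) mfun"
  assumes W: "positive_op \<mu> W" and V: "positive_op \<mu> V"
    and sq: "\<And>f. f \<in> L2 \<mu> \<Longrightarrow> ae_eq \<mu> (W (W f)) (V (V f))" and x: "x \<in> L2 \<mu>"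
  shows "ae_eq \<mu> (W x) (V x)"
proof -
  have W': "linear_op \<mu> W" "selfadjoint_op \<mu> W" "nonneg_op \<mu> W"
    and V': "linear_op \<mu> V" "selfadjoint_op \<mu> V" "nonneg_op \<mu> V"
    using W V by (simp_all add: positive_op_iff bounded_linear_op_iff)
  define D where "D = (\<lambda>f. msub (W f) (V f))"
  have D: "linear_op \<mu> D" "selfadjoint_op \<mu> D"
    unfolding D_def using W' V' by (simp_all add: linear_op_diff selfadjoint_diff)
  have WD: "\<forall>y\<in>L2 \<mu>. ae_eq \<mu> (W (D y)) (msmult (-1) (D (V y)))"
    unfolding D_def using sqrt_diff_intertwines(1)[OF W'(1) V'(1) sq] by blast
  have VD: "\<forall>y\<in>L2 \<mu>. ae_eq \<mu> (V (D y)) (msmult (-1) (D (W y)))"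
    unfolding D_def using sqrt_diff_intertwines(2)[OF W'(1) V'(1) sq] by blast
  have comm_W: "commuting_ops \<mu> W (\<lambda>f. D (D f))"
    by (rule commuting_square_if_intertwines[OF D(1) W'(1) V'(1) WD VD])
  have comm_V: "commuting_ops \<mu> V (\<lambda>f. D (D f))"
    by (rule commuting_square_if_intertwines[OF D(1) V'(1) W'(1) VD WD])
  have zero_W: "Re (hip \<mu> (D (D (W y))) y) = 0" if "y \<in> L2 \<mu>" for y
    by (rule Re_hip_intertwined_square_eq_0[OF W V'(1,3) D comm_W VD that])
  have zero_V: "Re (hip \<mu> (D (D (V y))) y) = 0" if "y \<in> L2 \<mu>" for y
    by (rule Re_hip_intertwined_square_eq_0[OF V W'(1,3) D comm_V WD that])
  have "Re (hip \<mu> (D (D (D y))) y) = 0" if y: "y \<in> L2 \<mu>" for y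
  proof -
    have L2: "W y \<in> L2 \<mu>" "V y \<in> L2 \<mu>" "D (D (W y)) \<in> L2 \<mu>" "D (D (V y)) \<in> L2 \<mu>"
      using y by (simp_all add: linear_op_L2[OF W'(1)] linear_op_L2[OF V'(1)] linear_op_L2[OF D(1)])
    have Dy: "D y = msub (W y) (V y)"
      by (simp add: D_def)
    have "hip \<mu> (D (D (D y))) y = hip \<mu> (msub (D (D (W y))) (D (D (V y)))) y"
      unfolding Dy using L2 y
      by (intro hip_ae_cong_left linear_op_msub[OF linear_op_comp[OF D(1) D(1)]])
        (simp_all add: msub_L2 linear_op_L2[OF D(1)])
    then show ?thesis
      using zero_W[OF y] zero_V[OF y] L2 y by (simp add: hip_msub_left)
  qed
  then have "ae_eq \<mu> (D x) (\<lambda>x. 0)"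
    by (rule ae_zero_if_selfadjoint_cube_form_zero[OF D _ x])
  then show ?thesis
    unfolding D_def by (rule ae_eq_if_msub_ae_zero)
qed

section \<open>Left multiplication by constant matrices\<close>

definition lmult :: "complex^'s^'s \<Rightarrow> ('g, 'r::finite, 's::finite) mfun \<Rightarrow> ('g, 'r, 's) mfun" where
  "lmult A f = (\<lambda>x. A ** f x)"

definition mat_adjoint :: "complex^'n^'m \<Rightarrow> complex^'m^'n" where
  "mat_adjoint A = (\<chi> i j. cnj (A $ j $ i))"

lemma mat_adjoint_mat_adjoint [simp]: "mat_adjoint (mat_adjoint A) = A"
  by (simp add: mat_adjoint_def vec_eq_iff)

lemma lmult_nth: "lmult A f x $ i $ j = (\<Sum>l\<in>UNIV. A $ i $ l * f x $ l $ j)"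
  by (simp add: lmult_def matrix_matrix_mult_def)

lemma lmult_lmult: "lmult A (lmult B f) = lmult (A ** B) f"
  by (simp add: lmult_def matrix_mul_assoc)

lemma lmult_mat_1 [simp]: "lmult (mat 1) f = f"
  by (simp add: lmult_def)

lemma lmult_L2:
  assumes f: "f \<in> L2 \<mu>"
  shows "lmult A f \<in> L2 \<mu>"
proof -
  define t where "t = (\<lambda>l x. \<chi> i j. A $ i $ l * f x $ l $ j)"
  have "t l \<in> L2 \<mu>" for l
    unfolding L2_def mem_Collect_eq
  proof (intro allI conjI)
    fix i j
    show "(\<lambda>x. t l x $ i $ j) \<in> borel_measurable \<mu>"
      using L2_measurable[OF f] by (simp add: t_def)
    show "integrable \<mu> (\<lambda>x. (cmod (t l x $ i $ j))\<^sup>2)"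
      using L2_integrable[OF f, of l j] by (simp add: t_def norm_mult power_mult_distrib)
  qed
  moreover have "lmult A f = (\<lambda>x. \<Sum>l\<in>UNIV. t l x)"
    by (simp add: t_def fun_eq_iff vec_eq_iff lmult_nth)
  ultimately show ?thesis
    by (simp add: sum_L2)
qed

lemma ae_eq_lmult: "ae_eq \<mu> f g \<Longrightarrow> ae_eq \<mu> (lmult A f) (lmult A g)"
  unfolding ae_eq_def lmult_def by (erule AE_mp) auto

lemma linear_op_lmult: "linear_op \<mu> (lmult A :: ('g, 'r::finite, 's::finite) mfun \<Rightarrow> _)"
proof -
  have "lmult A (madd (msmult a f) (msmult b g)) = madd (msmult a (lmult A f)) (msmult b (lmult A g))"
    for a b and f g :: "('g, 'r, 's) mfun"
    by (simp add: fun_eq_iff vec_eq_iff lmult_nth madd_def msmult_def sum.distrib sum_distrib_left algebra_simps)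
  then show ?thesis
    by (simp add: linear_op_def lmult_L2 ae_eq_lmult)
qed

lemma mip_lmult_left:
  assumes f: "f \<in> L2 \<mu>" and g: "g \<in> L2 \<mu>"
  shows "mip \<mu> (lmult A f) g = A ** mip \<mu> f g"
proof -
  have "mip \<mu> (lmult A f) g $ i $ k = (A ** mip \<mu> f g) $ i $ k" for i k
  proof -
    have "\<And>x. (\<Sum>j\<in>UNIV. (\<Sum>l\<in>UNIV. A $ i $ l * f x $ l $ j) * cnj (g x $ k $ j)) =
        (\<Sum>l\<in>UNIV. A $ i $ l * (\<Sum>j\<in>UNIV. f x $ l $ j * cnj (g x $ k $ j)))"
      by (simp only: sum_distrib_right sum_distrib_left mult.assoc) (rule sum.swap)
    then have "mip \<mu> (lmult A f) g $ i $ k =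
        (LINT x|\<mu>. (\<Sum>l\<in>UNIV. A $ i $ l * (\<Sum>j\<in>UNIV. f x $ l $ j * cnj (g x $ k $ j))))"
      by (simp add: mip_nth lmult_nth)
    also have "\<dots> = (\<Sum>l\<in>UNIV. A $ i $ l * mip \<mu> f g $ l $ k)"
      using integrable_mip_integrand[OF f g] by (simp add: mip_nth)
    finally show ?thesis
      by (simp add: matrix_matrix_mult_def)
  qed
  then show ?thesis
    by (simp add: vec_eq_iff)
qed

lemma mip_lmult_right:
  assumes f: "f \<in> L2 \<mu>" and g: "g \<in> L2 \<mu>"
  shows "mip \<mu> f (lmult B g) = mip \<mu> f g ** mat_adjoint B"
proof -
  have "mip \<mu> f (lmult B g) $ i $ k = cnj ((B ** mip \<mu> g f) $ k $ i)" for i k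
    using mip_lmult_left[OF g f] cnj_mip[of \<mu> "lmult B g" f k i] by simp
  then show ?thesis
    by (simp add: vec_eq_iff matrix_matrix_mult_def mat_adjoint_def cnj_mip mult.commute)
qed

lemma hip_eq_trace: "hip \<mu> f g = trace (mip \<mu> f g)"
  by (simp add: hip_def mtrace_def trace_def)

lemma hip_lmult_left: "f \<in> L2 \<mu> \<Longrightarrow> g \<in> L2 \<mu> \<Longrightarrow> hip \<mu> (lmult A f) g = trace (A ** mip \<mu> f g)"
  by (simp add: hip_eq_trace mip_lmult_left)

lemma hip_lmult_adjoint:
  assumes f: "f \<in> L2 \<mu>" and g: "g \<in> L2 \<mu>"
  shows "hip \<mu> (lmult A f) g = hip \<mu> f (lmult (mat_adjoint A) g)"
proof -
  have "hip \<mu> (lmult A f) g = trace (mip \<mu> f g ** A)"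
    using f g by (simp add: hip_lmult_left trace_mul_sym[of A])
  also have "\<dots> = hip \<mu> f (lmult (mat_adjoint A) g)"
    using f g by (simp add: hip_eq_trace mip_lmult_right)
  finally show ?thesis .
qed

lemma ae_eq_adjoint_if_selfadjoint:
  fixes T Ts :: "('g, 'r::finite, 's::finite) mfun \<Rightarrow> ('g, 'r, 's) mfun"
  assumes T: "linear_op \<mu> T" "selfadjoint_op \<mu> T" and Ts: "is_adjoint \<mu> T Ts" and g: "g \<in> L2 \<mu>"
  shows "ae_eq \<mu> (Ts g) (T g)"
proof (rule ae_eq_if_hip_eq)
  have adj: "\<And>f. f \<in> L2 \<mu> \<Longrightarrow> hip \<mu> (T f) g = hip \<mu> f (Ts g)" and TsL2: "Ts g \<in> L2 \<mu>"
    using Ts g by (auto simp: is_adjoint_def bounded_linear_op_def)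
  show "Ts g \<in> L2 \<mu>"
    by (rule TsL2)
  show "T g \<in> L2 \<mu>"
    using T(1) g by (rule linear_op_L2)
  fix f :: "('g, 'r, 's) mfun"
  assume f: "f \<in> L2 \<mu>"
  have "hip \<mu> (Ts g) f = cnj (hip \<mu> f (Ts g))"
    by (rule hip_commute)
  also have "hip \<mu> f (Ts g) = hip \<mu> f (T g)"
    using adj[OF f] T(2) f g by (simp add: selfadjoint_op_def)
  also have "cnj (hip \<mu> f (T g)) = hip \<mu> (T g) f"
    by (rule hip_commute[symmetric])
  finally show "hip \<mu> (Ts g) f = hip \<mu> (T g) f" .
qed

lemma commuting_lmult_if_mip_adjoint:
  fixes T Ts :: "('g, 'r::finite, 's::finite) mfun \<Rightarrow> ('g, 'r, 's) mfun"
  assumes T: "linear_op \<mu> T" "selfadjoint_op \<mu> T" and Ts: "is_adjoint \<mu> T Ts"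
    and mip_adjoint: "\<forall>f\<in>L2 \<mu>. \<forall>g\<in>L2 \<mu>. mip \<mu> (T f) g = mip \<mu> f (Ts g)"
  shows "commuting_ops \<mu> T (lmult A)"
  unfolding commuting_ops_def
proof
  fix f :: "('g, 'r, 's) mfun"
  assume f: "f \<in> L2 \<mu>"
  have mip_T: "mip \<mu> (T u) g = mip \<mu> u (T g)" if u: "u \<in> L2 \<mu>" and g: "g \<in> L2 \<mu>" for u g
  proof -
    have "Ts g \<in> L2 \<mu>"
      using Ts g by (simp add: is_adjoint_def bounded_linear_op_def)
    then show ?thesis
      using mip_adjoint u g mip_ae_cong_right[OF u _ linear_op_L2[OF T(1) g] ae_eq_adjoint_if_selfadjoint[OF T Ts g]]
      by simp
  qed
  show "ae_eq \<mu> (T (lmult A f)) (lmult A (T f))"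
  proof (rule ae_eq_if_hip_eq)
    fix g :: "('g, 'r, 's) mfun"
    assume g: "g \<in> L2 \<mu>"
    have "hip \<mu> (T (lmult A f)) g = hip \<mu> (lmult A f) (T g)"
      using T(2) f g by (simp add: selfadjoint_op_def lmult_L2)
    also have "\<dots> = trace (A ** mip \<mu> (T f) g)"
      using f g by (simp add: hip_lmult_left linear_op_L2[OF T(1)] mip_T)
    also have "\<dots> = hip \<mu> (lmult A (T f)) g"
      using f g by (simp add: hip_lmult_left linear_op_L2[OF T(1)])
    finally show "hip \<mu> (T (lmult A f)) g = hip \<mu> (lmult A (T f)) g" .
  qed (use f in \<open>simp_all add: lmult_L2 linear_op_L2[OF T(1)]\<close>)
qed

lemma L2norm_lmult_unitary:
  assumes "mat_adjoint A ** A = mat 1" and "f \<in> L2 \<mu>"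
  shows "L2norm \<mu> (lmult A f) = L2norm \<mu> f"
proof -
  have "hip \<mu> (lmult A f) (lmult A f) = hip \<mu> f f"
    using assms by (simp add: hip_lmult_adjoint lmult_L2 lmult_lmult)
  then show ?thesis
    by (simp add: L2norm_def)
qed

lemma positive_op_conj_lmult:
  fixes W :: "('g, 'r::finite, 's::finite) mfun \<Rightarrow> ('g, 'r, 's) mfun"
  assumes W: "positive_op \<mu> W" and A: "mat_adjoint A = A" "A ** A = mat 1"
  shows "positive_op \<mu> (\<lambda>f. lmult A (W (lmult A f)))"
proof -
  obtain C where W': "linear_op \<mu> W" "selfadjoint_op \<mu> W" "nonneg_op \<mu> W"
    and bound: "\<forall>f\<in>L2 \<mu>. L2norm \<mu> (W f) \<le> C * L2norm \<mu> f"
    using W by (auto simp: positive_op_iff bounded_linear_op_iff)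
  have WL2: "\<And>f. f \<in> L2 \<mu> \<Longrightarrow> W (lmult A f) \<in> L2 \<mu>"
    by (simp add: linear_op_L2[OF W'(1)] lmult_L2)
  have hip_A: "\<And>f g. f \<in> L2 \<mu> \<Longrightarrow> g \<in> L2 \<mu> \<Longrightarrow> hip \<mu> (lmult A f) g = hip \<mu> f (lmult A g)"
    using A(1) by (simp add: hip_lmult_adjoint)
  have "linear_op \<mu> (\<lambda>f. lmult A (W (lmult A f)))"
    by (rule linear_op_comp[OF linear_op_lmult linear_op_comp[OF W'(1) linear_op_lmult]])
  moreover have "\<forall>f\<in>L2 \<mu>. L2norm \<mu> (lmult A (W (lmult A f))) \<le> C * L2norm \<mu> f"
  proof
    fix f :: "('g, 'r, 's) mfun"
    assume f: "f \<in> L2 \<mu>"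
    have "L2norm \<mu> (lmult A (W (lmult A f))) = L2norm \<mu> (W (lmult A f))"
      using A f by (simp add: L2norm_lmult_unitary WL2)
    also have "\<dots> \<le> C * L2norm \<mu> (lmult A f)"
      using bound lmult_L2[OF f] by blast
    also have "\<dots> = C * L2norm \<mu> f"
      using A f by (simp add: L2norm_lmult_unitary)
    finally show "L2norm \<mu> (lmult A (W (lmult A f))) \<le> C * L2norm \<mu> f" .
  qed
  moreover have "selfadjoint_op \<mu> (\<lambda>f. lmult A (W (lmult A f)))"
    using W'(2) by (simp add: selfadjoint_op_def hip_A WL2 lmult_L2)
  moreover have "nonneg_op \<mu> (\<lambda>f. lmult A (W (lmult A f)))"
    using W'(3) by (simp add: nonneg_op_def hip_A WL2 lmult_L2)
  ultimately show ?thesis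
    by (auto simp: positive_op_iff bounded_linear_op_iff)
qed

lemma sqrt_commuting_lmult_involution:
  fixes T W :: "('g, 'r::finite, 's::finite) mfun \<Rightarrow> ('g, 'r, 's) mfun"
  assumes W: "is_sqrt_op \<mu> T W" and T: "linear_op \<mu> T" "commuting_ops \<mu> T (lmult A)"
    and A: "mat_adjoint A = A" "A ** A = mat 1"
  shows "commuting_ops \<mu> W (lmult A)"
  unfolding commuting_ops_def
proof
  fix f :: "('g, 'r, 's) mfun"
  assume f: "f \<in> L2 \<mu>"
  let ?V = "\<lambda>h. lmult A (W (lmult A h))"
  have W': "positive_op \<mu> W" and sq: "\<And>h. h \<in> L2 \<mu> \<Longrightarrow> ae_eq \<mu> (W (W h)) (T h)"
    using W by (simp_all add: is_sqrt_op_def ae_eq_def)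
  have AA: "\<And>h. lmult A (lmult A h) = h"
    by (simp add: lmult_lmult A)
  have sq_V: "ae_eq \<mu> (W (W h)) (?V (?V h))" if h: "h \<in> L2 \<mu>" for h
  proof -
    have "ae_eq \<mu> (?V (?V h)) (lmult A (T (lmult A h)))"
      using sq[OF lmult_L2[OF h]] by (simp add: AA ae_eq_lmult)
    also have "ae_eq \<mu> \<dots> (lmult A (lmult A (T h)))"
      using T(2) h by (simp add: commuting_ops_def ae_eq_lmult)
    also have "ae_eq \<mu> \<dots> (W (W h))"
      using ae_eq_sym[OF sq[OF h]] by (simp add: AA)
    finally show ?thesis
      by (rule ae_eq_sym)
  qed
  have "ae_eq \<mu> (W f) (?V f)"
    by (rule positive_sqrt_unique[OF W' positive_op_conj_lmult[OF W' A] sq_V f])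
  then have "ae_eq \<mu> (lmult A (W f)) (W (lmult A f))"
    using ae_eq_lmult[of \<mu> "W f" "?V f" A] by (simp add: AA)
  then show "ae_eq \<mu> (W (lmult A f)) (lmult A (W f))"
    by (rule ae_eq_sym)
qed

lemma commuting_ops_comp:
  fixes W X Y :: "('g, 'r::finite, 's::finite) mfun \<Rightarrow> ('g, 'r, 's) mfun"
  assumes W: "linear_op \<mu> W" and X: "linear_op \<mu> X" "commuting_ops \<mu> W X"
    and Y: "linear_op \<mu> Y" "commuting_ops \<mu> W Y"
  shows "commuting_ops \<mu> W (\<lambda>f. X (Y f))"
  unfolding commuting_ops_def
proof
  fix f :: "('g, 'r, 's) mfun"
  assume f: "f \<in> L2 \<mu>"
  have "ae_eq \<mu> (W (X (Y f))) (X (W (Y f)))"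
    using X(2) f by (simp add: commuting_ops_def linear_op_L2[OF Y(1)])
  also have "ae_eq \<mu> \<dots> (X (Y (W f)))"
    using Y(2) f by (intro linear_op_ae_cong[OF X(1)])
      (simp_all add: commuting_ops_def linear_op_L2[OF Y(1)] linear_op_L2[OF W])
  finally show "ae_eq \<mu> (W (X (Y f))) (X (Y (W f)))" .
qed

definition diag_unit :: "'n::finite \<Rightarrow> complex^'n^'n" where
  "diag_unit k = (\<chi> a b. if a = k \<and> b = k then 1 else 0)"

definition diag_reflection :: "'n::finite \<Rightarrow> complex^'n^'n" where
  "diag_reflection k = (\<chi> a b. if a = b then (if a = k then -1 else 1) else 0)"

definition swap_mat :: "'n::finite \<Rightarrow> 'n \<Rightarrow> complex^'n^'n" where
  "swap_mat k l = (\<chi> a b. if b = Transposition.transpose k l a then 1 else 0)"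

lemma diag_unit_mult_nth: "(diag_unit k ** M) $ a $ c = (if a = k then M $ k $ c else 0)"
  by (simp add: matrix_matrix_mult_def diag_unit_def mult_delta_left sum.delta' cong: if_cong)

lemma diag_reflection_mult_nth: "(diag_reflection k ** M) $ a $ c = (if a = k then - M $ a $ c else M $ a $ c)"
  by (simp add: matrix_matrix_mult_def diag_reflection_def mult_delta_left sum.delta cong: if_cong)

lemma swap_mat_mult_nth: "(swap_mat k l ** M) $ a $ c = M $ (Transposition.transpose k l a) $ c"
  by (simp add: matrix_matrix_mult_def swap_mat_def mult_delta_left sum.delta' cong: if_cong)

lemma mat_adjoint_diag_reflection: "mat_adjoint (diag_reflection k) = diag_reflection k"
  by (simp add: vec_eq_iff mat_adjoint_def diag_reflection_def)

lemma diag_reflection_involution: "diag_reflection k ** diag_reflection k = mat 1"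
  by (simp add: vec_eq_iff diag_reflection_mult_nth) (simp add: diag_reflection_def mat_def)

lemma mat_adjoint_swap_mat: "mat_adjoint (swap_mat k l) = swap_mat k l"
  by (auto simp: vec_eq_iff mat_adjoint_def swap_mat_def transpose_eq_iff)

lemma swap_mat_involution: "swap_mat k l ** swap_mat k l = mat 1"
  by (simp add: vec_eq_iff swap_mat_mult_nth) (auto simp: swap_mat_def mat_def transpose_eq_iff)

text \<open>\<open>diag_unit k ** swap_mat k l\<close> is the matrix unit \<open>e\<^sub>k\<^sub>l\<close>, and the trace against it picks out the entry \<open>(l, k)\<close>.\<close>

lemma trace_diag_unit_swap_mat: "trace (diag_unit k ** (swap_mat k l ** M)) = M $ l $ k"
  by (simp add: trace_def diag_unit_mult_nth swap_mat_mult_nth)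

lemma lmult_diag_unit: "lmult (diag_unit k) f = msmult (1/2) (msub f (lmult (diag_reflection k) f))"
  by (simp add: lmult_def fun_eq_iff vec_eq_iff diag_unit_mult_nth diag_reflection_mult_nth
      msmult_def msub_def madd_def)

lemma commuting_lmult_diag_unit:
  fixes W :: "('g, 'r::finite, 's::finite) mfun \<Rightarrow> ('g, 'r, 's) mfun"
  assumes W: "linear_op \<mu> W" and comm: "commuting_ops \<mu> W (lmult (diag_reflection k))"
  shows "commuting_ops \<mu> W (lmult (diag_unit k))"
  unfolding commuting_ops_def lmult_diag_unit
proof
  fix f :: "('g, 'r, 's) mfun"
  assume f: "f \<in> L2 \<mu>"
  let ?D = "lmult (diag_reflection k)"
  have Df: "?D f \<in> L2 \<mu>"
    using f by (rule lmult_L2)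
  have "ae_eq \<mu> (W (msmult (1/2) (msub f (?D f)))) (msmult (1/2) (W (msub f (?D f))))"
    using f Df by (intro linear_op_msmult[OF W] msub_L2)
  also have "ae_eq \<mu> \<dots> (msmult (1/2) (msub (W f) (W (?D f))))"
    using f Df by (intro ae_eq_msmult linear_op_msub[OF W])
  also have "ae_eq \<mu> \<dots> (msmult (1/2) (msub (W f) (?D (W f))))"
    using comm f by (intro ae_eq_msmult ae_eq_msub) (simp_all add: commuting_ops_def)
  finally show "ae_eq \<mu> (W (msmult (1/2) (msub f (?D f)))) (msmult (1/2) (msub (W f) (?D (W f))))" .
qed

lemma mip_nth_eq_hip_lmult:
  "f \<in> L2 \<mu> \<Longrightarrow> g \<in> L2 \<mu> \<Longrightarrow> mip \<mu> f g $ l $ k = hip \<mu> (lmult (diag_unit k ** swap_mat k l) f) g"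
  by (simp add: hip_lmult_left mip_lmult_left matrix_mul_assoc[symmetric] trace_diag_unit_swap_mat)

lemma mip_adjoint_if_commuting_lmult_involutions:
  fixes W Ws :: "('g, 'r::finite, 's::finite) mfun \<Rightarrow> ('g, 'r, 's) mfun"
  assumes W: "linear_op \<mu> W" and Ws: "is_adjoint \<mu> W Ws"
    and comm: "\<And>A. mat_adjoint A = A \<Longrightarrow> A ** A = mat 1 \<Longrightarrow> commuting_ops \<mu> W (lmult A)"
    and f: "f \<in> L2 \<mu>" and g: "g \<in> L2 \<mu>"
  shows "mip \<mu> (W f) g = mip \<mu> f (Ws g)"
proof -
  have adjoint: "\<forall>u\<in>L2 \<mu>. \<forall>v\<in>L2 \<mu>. hip \<mu> (W u) v = hip \<mu> u (Ws v)" and Ws_g: "Ws g \<in> L2 \<mu>"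
    using Ws g by (simp_all add: is_adjoint_def bounded_linear_op_def)
  have "mip \<mu> (W f) g $ l $ k = mip \<mu> f (Ws g) $ l $ k" for l k
  proof -
    let ?E = "lmult (diag_unit k ** swap_mat k l)"
    have "commuting_ops \<mu> W (\<lambda>h. lmult (diag_unit k) (lmult (swap_mat k l) h))"
      using commuting_ops_comp[OF W linear_op_lmult
          commuting_lmult_diag_unit[OF W comm[OF mat_adjoint_diag_reflection diag_reflection_involution]]
          linear_op_lmult comm[OF mat_adjoint_swap_mat swap_mat_involution]] .
    then have W_E: "ae_eq \<mu> (W (?E f)) (?E (W f))"
      using f by (simp add: commuting_ops_def lmult_lmult)
    have "mip \<mu> (W f) g $ l $ k = hip \<mu> (?E (W f)) g"
      using f g by (simp add: mip_nth_eq_hip_lmult linear_op_L2[OF W])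
    also have "\<dots> = hip \<mu> (W (?E f)) g"
      using ae_eq_sym[OF W_E] f g
      by (intro hip_ae_cong_left) (simp_all add: lmult_L2 linear_op_L2[OF W])
    also have "\<dots> = mip \<mu> f (Ws g) $ l $ k"
      using adjoint Ws_g f g by (simp add: mip_nth_eq_hip_lmult lmult_L2)
    finally show ?thesis .
  qed
  then show ?thesis
    by (simp add: vec_eq_iff)
qed

theorem proposition3p5:
  fixes \<mu> :: "'g::{topological_ab_group_add, metric_space} measure"
    and T Ts W Ws :: "('g, 'r::finite, 's::finite) mfun \<Rightarrow> ('g, 'r, 's) mfun"
  assumes "locally_compact_sigma_compact TYPE('g)"
    and "haar_measure \<mu>"
    and "bounded_linear_op \<mu> T"
    and "positive_op \<mu> T"
    and "is_adjoint \<mu> T Ts"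
    and "\<forall>f\<in>L2 \<mu>. \<forall>g\<in>L2 \<mu>. mip \<mu> (T f) g = mip \<mu> f (Ts g)"
    and "is_sqrt_op \<mu> T W"
    and "is_adjoint \<mu> W Ws"
  shows "\<forall>f\<in>L2 \<mu>. \<forall>g\<in>L2 \<mu>. mip \<mu> (W f) g = mip \<mu> f (Ws g)"
proof -
  have T: "linear_op \<mu> T" "selfadjoint_op \<mu> T"
    using assms(4) by (simp_all add: positive_op_iff bounded_linear_op_iff)
  have W: "linear_op \<mu> W"
    using assms(7) by (simp add: is_sqrt_op_def bounded_linear_op_iff)
  have "commuting_ops \<mu> T (lmult A)" for A
    by (rule commuting_lmult_if_mip_adjoint[OF T assms(5,6)])
  then have "commuting_ops \<mu> W (lmult A)" if "mat_adjoint A = A" "A ** A = mat 1" for A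
    by (rule sqrt_commuting_lmult_involution[OF assms(7) T(1) _ that])
  then show ?thesis
    using mip_adjoint_if_commuting_lmult_involutions[OF W assms(8)] by blast
qed

end
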